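(* The functors $(\cdot)^*:\mathbf{D\text{-}Frm}\to\mathbf{HLAs}$ and $(\cdot)_*:\mathbf{HLAs}\to\mathbf{D\text{-}Frm}$ form a dual equivalence of categories $\mathbf{HLAs}\equiv^{\mathrm{op}}\mathbf{D\text{-}Frm}$.
   Context: $\mathbf{HLAs}$: category of Heyting-Lewis algebras (Heyting algebras with binary $\multimap$ satisfying $(a\multimap b)\wedge(a\multimap c)=a\multimap(b\wedge c)$, $(a\multimap c)\wedge(b\multimap c)=(a\vee b)\multimap c$, $(a\multimap b)\wedge(b\multimap c)\le a\multimap c$, $a\multimap a=\top$) with Heyting homomorphisms preserving $\multimap$. A $\multimap$-frame is $(X,\preceq,\sqsubset)$, $\preceq$ a partial order, with $x\preceq y\sqsubset z\Rightarrow x\sqsubset z$; $a\Rightarrow b$ and $a\Rrightarrow b$ on $\preceq$-upsets are $\{x\mid\forall y(xRy, y\in a\Rightarrow y\in b)\}$ for $R={\preceq}$, resp. $R={\sqsubset}$. A general $\multimap$-frame $(X,\preceq,\sqsubset,P)$ has $P$ a family of $\preceq$-upsets containing $X,\emptyset$, closed under $\cap,\cup,\Rightarrow,\Rrightarrow$; it is descriptive if compact (any subfamily of $P\cup\{X\setminus a\mid a\in P\}$ with the finite intersection property has nonempty intersection), $\preceq$-refined ($x\not\preceq y\Rightarrow\exists a\in P$, $x\in a$, $y\notin a$) and $\sqsubset$-refined (not $x\sqsubset y\Rightarrow\exists a,b\in P$, $x\in a\Rrightarrow b$, $y\in a$, $y\notin b$). $\mathbf{D\text{-}Frm}$: descriptive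 $\multimap$-frames with morphisms $f$ that are bounded for both relations (for $R\in\{\preceq,\sqsubset\}$: $xRy\Rightarrow f(x)Rf(y)$, and $f(x)Rz'\Rightarrow\exists z$, $xRz$, $f(z)=z'$) and satisfy $f^{-1}(a')\in P$ for all admissible $a'$ of the codomain. $(\cdot)^*$ sends $(X,\preceq,\sqsubset,P)$ to the HL-algebra $(P,\cap,\cup,\Rightarrow,\Rrightarrow,X,\emptyset)$ and $f$ to $f^{-1}$. $(\cdot)_*$ sends $\mathbb A$ to $(\mathrm{pf}A,\subseteq,\sqsubset,\tilde A)$, where $\mathrm{pf}A$ is the set of prime filters, $\tilde a=\{\mathfrak p\mid a\in\mathfrak p\}$, $\tilde A=\{\tilde a\mid a\in A\}$, and $\mathfrak p\sqsubset\mathfrak q$ iff $\forall a,b$ ($a\multimap b\in\mathfrak p$ and $a\in\mathfrak q$ imply $b\in\mathfrak q$); it sends $h$ to $h^{-1}$. *)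

theory Defs
  imports Main
begin

record 'a hla =
  hcar   :: "'a set"
  hmeet  :: "'a \<Rightarrow> 'a \<Rightarrow> 'a"
  hjoin  :: "'a \<Rightarrow> 'a \<Rightarrow> 'a"
  himp   :: "'a \<Rightarrow> 'a \<Rightarrow> 'a"
  hlew   :: "'a \<Rightarrow> 'a \<Rightarrow> 'a"
  htop   :: 'a
  hbot   :: 'a

definition hle :: "'a hla \<Rightarrow> 'a \<Rightarrow> 'a \<Rightarrow> bool" where
  "hle A a b \<longleftrightarrow> hmeet A a b = a"

definition is_heyting :: "'a hla \<Rightarrow> bool" where
  "is_heyting A \<longleftrightarrow>
     htop A \<in> hcar A \<and> hbot A \<in> hcar A \<and>
     (\<forall>a\<in>hcar A. \<forall>b\<in>hcar A. hmeet A a b \<in> hcar A \<and> hjoin A a b \<in> hcar A \<and>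
                               himp A a b \<in> hcar A \<and> hlew A a b \<in> hcar A) \<and>
     (\<forall>a\<in>hcar A. \<forall>b\<in>hcar A. \<forall>c\<in>hcar A.
        hmeet A a (hmeet A b c) = hmeet A (hmeet A a b) c \<and>
        hjoin A a (hjoin A b c) = hjoin A (hjoin A a b) c) \<and>
     (\<forall>a\<in>hcar A. \<forall>b\<in>hcar A.
        hmeet A a b = hmeet A b a \<and> hjoin A a b = hjoin A b a \<and>
        hmeet A a (hjoin A a b) = a \<and> hjoin A a (hmeet A a b) = a) \<and>
     (\<forall>a\<in>hcar A. hmeet A a (htop A) = a \<and> hjoin A a (hbot A) = a) \<and>
     (\<forall>a\<in>hcar A. \<forall>b\<in>hcar A. \<forall>c\<in>hcar A.
        hle A (hmeet A c a) b \<longleftrightarrow> hle A c (himp A a b))"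

definition is_hla :: "'a hla \<Rightarrow> bool" where
  "is_hla A \<longleftrightarrow> is_heyting A \<and>
     (\<forall>a\<in>hcar A. \<forall>b\<in>hcar A. \<forall>c\<in>hcar A.
        hmeet A (hlew A a b) (hlew A a c) = hlew A a (hmeet A b c) \<and>
        hmeet A (hlew A a c) (hlew A b c) = hlew A (hjoin A a b) c \<and>
        hle A (hmeet A (hlew A a b) (hlew A b c)) (hlew A a c)) \<and>
     (\<forall>a\<in>hcar A. hlew A a a = htop A)"

definition hla_hom :: "'a hla \<Rightarrow> 'b hla \<Rightarrow> ('a \<Rightarrow> 'b) \<Rightarrow> bool" where
  "hla_hom A B h \<longleftrightarrow>
     (\<forall>a\<in>hcar A. h a \<in> hcar B) \<and>
     h (htop A) = htop B \<and> h (hbot A) = hbot B \<and>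
     (\<forall>a\<in>hcar A. \<forall>b\<in>hcar A.
        h (hmeet A a b) = hmeet B (h a) (h b) \<and> h (hjoin A a b) = hjoin B (h a) (h b) \<and>
        h (himp A a b) = himp B (h a) (h b) \<and> h (hlew A a b) = hlew B (h a) (h b))"

definition hla_iso :: "'a hla \<Rightarrow> 'b hla \<Rightarrow> ('a \<Rightarrow> 'b) \<Rightarrow> bool" where
  "hla_iso A B h \<longleftrightarrow> hla_hom A B h \<and>
     (\<exists>g. hla_hom B A g \<and> (\<forall>a\<in>hcar A. g (h a) = a) \<and> (\<forall>b\<in>hcar B. h (g b) = b))"

record 'x gframe =
  pts :: "'x set"
  fle :: "'x \<Rightarrow> 'x \<Rightarrow> bool"
  fsq :: "'x \<Rightarrow> 'x \<Rightarrow> bool"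
  adm :: "'x set set"

definition is_upset :: "'x gframe \<Rightarrow> 'x set \<Rightarrow> bool" where
  "is_upset X a \<longleftrightarrow> a \<subseteq> pts X \<and> (\<forall>x\<in>a. \<forall>y\<in>pts X. fle X x y \<longrightarrow> y \<in> a)"

definition fimp :: "'x gframe \<Rightarrow> 'x set \<Rightarrow> 'x set \<Rightarrow> 'x set" where
  "fimp X a b = {x\<in>pts X. \<forall>y\<in>pts X. fle X x y \<and> y \<in> a \<longrightarrow> y \<in> b}"

definition flew :: "'x gframe \<Rightarrow> 'x set \<Rightarrow> 'x set \<Rightarrow> 'x set" where
  "flew X a b = {x\<in>pts X. \<forall>y\<in>pts X. fsq X x y \<and> y \<in> a \<longrightarrow> y \<in> b}"

definition lew_frame :: "'x gframe \<Rightarrow> bool" where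
  "lew_frame X \<longleftrightarrow>
     (\<forall>x y. fle X x y \<longrightarrow> x \<in> pts X \<and> y \<in> pts X) \<and>
     (\<forall>x y. fsq X x y \<longrightarrow> x \<in> pts X \<and> y \<in> pts X) \<and>
     (\<forall>x\<in>pts X. fle X x x) \<and>
     (\<forall>x y. fle X x y \<and> fle X y x \<longrightarrow> x = y) \<and>
     (\<forall>x y z. fle X x y \<and> fle X y z \<longrightarrow> fle X x z) \<and>
     (\<forall>x y z. fle X x y \<and> fsq X y z \<longrightarrow> fsq X x z)"

definition general_frame :: "'x gframe \<Rightarrow> bool" where
  "general_frame X \<longleftrightarrow> lew_frame X \<and>
     (\<forall>a\<in>adm X. is_upset X a) \<and> pts X \<in> adm X \<and> {} \<in> adm X \<and>
     (\<forall>a\<in>adm X. \<forall>b\<in>adm X. a \<inter> b \<in> adm X \<and> a \<union> b \<in> adm X \<and>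
                              fimp X a b \<in> adm X \<and> flew X a b \<in> adm X)"

definition fip :: "'x gframe \<Rightarrow> 'x set set \<Rightarrow> bool" where
  "fip X S \<longleftrightarrow> (\<forall>F. F \<subseteq> S \<and> finite F \<longrightarrow> pts X \<inter> \<Inter>F \<noteq> {})"

definition compact_frame :: "'x gframe \<Rightarrow> bool" where
  "compact_frame X \<longleftrightarrow>
     (\<forall>S. S \<subseteq> adm X \<union> {pts X - a | a. a \<in> adm X} \<and> fip X S \<longrightarrow> pts X \<inter> \<Inter>S \<noteq> {})"

definition descriptive_frame :: "'x gframe \<Rightarrow> bool" where
  "descriptive_frame X \<longleftrightarrow> general_frame X \<and> compact_frame X \<and>
     (\<forall>x\<in>pts X. \<forall>y\<in>pts X. \<not> fle X x y \<longrightarrow> (\<exists>a\<in>adm X. x \<in> a \<and> y \<notin> a)) \<and>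
     (\<forall>x\<in>pts X. \<forall>y\<in>pts X. \<not> fsq X x y \<longrightarrow>
        (\<exists>a\<in>adm X. \<exists>b\<in>adm X. x \<in> flew X a b \<and> y \<in> a \<and> y \<notin> b))"

definition bounded_for :: "'x gframe \<Rightarrow> 'y gframe \<Rightarrow> ('x \<Rightarrow> 'x \<Rightarrow> bool) \<Rightarrow> ('y \<Rightarrow> 'y \<Rightarrow> bool)
     \<Rightarrow> ('x \<Rightarrow> 'y) \<Rightarrow> bool" where
  "bounded_for X Y R R' f \<longleftrightarrow>
     (\<forall>x y. R x y \<longrightarrow> R' (f x) (f y)) \<and>
     (\<forall>x\<in>pts X. \<forall>z'. R' (f x) z' \<longrightarrow> (\<exists>z. R x z \<and> f z = z'))"

definition dframe_mor :: "'x gframe \<Rightarrow> 'y gframe \<Rightarrow> ('x \<Rightarrow> 'y) \<Rightarrow> bool" where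
  "dframe_mor X Y f \<longleftrightarrow>
     (\<forall>x\<in>pts X. f x \<in> pts Y) \<and>
     bounded_for X Y (fle X) (fle Y) f \<and> bounded_for X Y (fsq X) (fsq Y) f \<and>
     (\<forall>a'\<in>adm Y. {x\<in>pts X. f x \<in> a'} \<in> adm X)"

definition dframe_iso :: "'x gframe \<Rightarrow> 'y gframe \<Rightarrow> ('x \<Rightarrow> 'y) \<Rightarrow> bool" where
  "dframe_iso X Y f \<longleftrightarrow> dframe_mor X Y f \<and>
     (\<exists>g. dframe_mor Y X g \<and> (\<forall>x\<in>pts X. g (f x) = x) \<and> (\<forall>y\<in>pts Y. f (g y) = y))"

section \<open>The functor (.)^* : D-Frm -> HLAs\<close>

definition cplx_alg :: "'x gframe \<Rightarrow> 'x set hla" where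
  "cplx_alg X = \<lparr> hcar = adm X, hmeet = (\<inter>), hjoin = (\<union>), himp = fimp X, hlew = flew X,
                  htop = pts X, hbot = {} \<rparr>"

definition cplx_hom :: "'x gframe \<Rightarrow> ('x \<Rightarrow> 'y) \<Rightarrow> 'y set \<Rightarrow> 'x set" where
  "cplx_hom X f a' = {x\<in>pts X. f x \<in> a'}"

section \<open>The functor (.)_* : HLAs -> D-Frm\<close>

definition prime_filter :: "'a hla \<Rightarrow> 'a set \<Rightarrow> bool" where
  "prime_filter A p \<longleftrightarrow> p \<subseteq> hcar A \<and> htop A \<in> p \<and> hbot A \<notin> p \<and>
     (\<forall>a\<in>p. \<forall>b\<in>hcar A. hle A a b \<longrightarrow> b \<in> p) \<and>
     (\<forall>a\<in>p. \<forall>b\<in>p. hmeet A a b \<in> p) \<and>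
     (\<forall>a\<in>hcar A. \<forall>b\<in>hcar A. hjoin A a b \<in> p \<longrightarrow> a \<in> p \<or> b \<in> p)"

definition pf :: "'a hla \<Rightarrow> 'a set set" where
  "pf A = {p. prime_filter A p}"

definition tld :: "'a hla \<Rightarrow> 'a \<Rightarrow> 'a set set" where
  "tld A a = {p\<in>pf A. a \<in> p}"

definition pf_sq :: "'a hla \<Rightarrow> 'a set \<Rightarrow> 'a set \<Rightarrow> bool" where
  "pf_sq A p q \<longleftrightarrow> p \<in> pf A \<and> q \<in> pf A \<and>
     (\<forall>a\<in>hcar A. \<forall>b\<in>hcar A. hlew A a b \<in> p \<and> a \<in> q \<longrightarrow> b \<in> q)"

definition dual_frame :: "'a hla \<Rightarrow> 'a set gframe" where
  "dual_frame A = \<lparr> pts = pf A, fle = (\<lambda>p q. p \<in> pf A \<and> q \<in> pf A \<and> p \<subseteq> q),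
                    fsq = pf_sq A, adm = tld A ` hcar A \<rparr>"

definition dual_hom :: "'a hla \<Rightarrow> ('a \<Rightarrow> 'b) \<Rightarrow> 'b set \<Rightarrow> 'a set" where
  "dual_hom A h q = {a\<in>hcar A. h a \<in> q}"

definition eta :: "'a hla \<Rightarrow> 'a \<Rightarrow> 'a set set" where
  "eta A = tld A"

definition epsilon :: "'x gframe \<Rightarrow> 'x \<Rightarrow> 'x set set" where
  "epsilon X x = {a\<in>adm X. x \<in> a}"

end

theory Submission
  imports Defs
begin

text \<open>Both halves of the duality rest on one representation result for weak implications
  \<open>L\<close>, the operations satisfying the axioms of the Lewis arrow, among them the Heyting
  implication. For a prime filter \<open>p\<close>, the relation \<open>L u v \<in> p\<close> is a preorder containing
  \<open>\<le>\<close>, closed under joins on the left and meets on the right. A prime filter theorem relative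
  to such a preorder (Zorn's lemma on the ideals closed downwards under it; distributivity makes
  a maximal one prime) shows that \<open>L a b \<in> p\<close> iff every prime filter that is closed upwards
  under this relation and contains \<open>a\<close> also contains \<open>b\<close>. For the Heyting implication these
  prime filters are the supersets of \<open>p\<close>, for the Lewis arrow the \<open>\<sqsubset>\<close>-successors of
  \<open>p\<close>; so \<open>a \<mapsto> tld A a\<close> preserves both arrows, and it is injective by prime filter
  separation. The same argument run through a homomorphism \<open>h\<close> gives the back conditions of
  the preimage map of \<open>h\<close>. Dually, refinedness makes \<open>x \<mapsto> {a \<in> P. x \<in> a}\<close> reflect
  \<open>\<preceq>\<close> and \<open>\<sqsubset>\<close>, and compactness makes it onto the prime filters.\<close>

lemma dual_frame_simps [simp]:
  "pts (dual_frame A) = pf A"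
  "fle (dual_frame A) p q \<longleftrightarrow> p \<in> pf A \<and> q \<in> pf A \<and> p \<subseteq> q"
  "fsq (dual_frame A) = pf_sq A"
  "adm (dual_frame A) = tld A ` hcar A"
  unfolding dual_frame_def by simp_all

lemma cplx_alg_simps [simp]:
  "hcar (cplx_alg X) = adm X" "hmeet (cplx_alg X) = (\<inter>)" "hjoin (cplx_alg X) = (\<union>)"
  "himp (cplx_alg X) = fimp X" "hlew (cplx_alg X) = flew X"
  "htop (cplx_alg X) = pts X" "hbot (cplx_alg X) = {}"
  unfolding cplx_alg_def by simp_all

lemma hle_cplx_alg [simp]: "hle (cplx_alg X) a b \<longleftrightarrow> a \<subseteq> b"
  unfolding hle_def by auto

lemma hla_iso_if_bij:
  assumes A: "is_heyting A" and hom: "hla_hom A B h" and bij: "bij_betw h (hcar A) (hcar B)"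
  shows "hla_iso A B h"
proof -
  define g where "g = inv_into (hcar A) h"
  have g_h: "g (h a) = a" if "a \<in> hcar A" for a
    using bij that unfolding g_def by (simp add: bij_betw_inv_into_left)
  have "hla_hom B A g"
    unfolding hla_hom_def
  proof (intro conjI ballI)
    fix b assume "b \<in> hcar B"
    then show "g b \<in> hcar A"
      using bij unfolding g_def bij_betw_def by (simp add: inv_into_into)
  next
    show "g (htop B) = htop A" "g (hbot B) = hbot A"
      using A hom g_h unfolding hla_hom_def is_heyting_def by metis+
  next
    fix b c assume "b \<in> hcar B" "c \<in> hcar B"
    then obtain a a' where "a \<in> hcar A" "a' \<in> hcar A" "b = h a" "c = h a'"
      using bij unfolding bij_betw_def by blast
    then show "g (hmeet B b c) = hmeet A (g b) (g c)" "g (hjoin B b c) = hjoin A (g b) (g c)"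
      "g (himp B b c) = himp A (g b) (g c)" "g (hlew B b c) = hlew A (g b) (g c)"
      using A hom g_h unfolding hla_hom_def is_heyting_def by metis+
  qed
  moreover have "\<forall>b\<in>hcar B. h (g b) = b"
    using bij unfolding g_def by (simp add: bij_betw_inv_into_right)
  ultimately show ?thesis
    unfolding hla_iso_def using hom g_h by blast
qed

section \<open>Heyting algebras on a carrier\<close>

locale heyting_alg =
  fixes A :: "'a hla"
  assumes heyting: "is_heyting A"
begin

abbreviation "car \<equiv> hcar A"
abbreviation "meet \<equiv> hmeet A"
abbreviation "join \<equiv> hjoin A"
abbreviation "imp \<equiv> himp A"
abbreviation "lew \<equiv> hlew A"
abbreviation "tp \<equiv> htop A"
abbreviation "bt \<equiv> hbot A"
abbreviation "le \<equiv> hle A"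

lemma closed [simp]:
  "tp \<in> car" "bt \<in> car"
  "a \<in> car \<Longrightarrow> b \<in> car \<Longrightarrow> meet a b \<in> car"
  "a \<in> car \<Longrightarrow> b \<in> car \<Longrightarrow> join a b \<in> car"
  "a \<in> car \<Longrightarrow> b \<in> car \<Longrightarrow> imp a b \<in> car"
  "a \<in> car \<Longrightarrow> b \<in> car \<Longrightarrow> lew a b \<in> car"
  using heyting unfolding is_heyting_def by blast+

lemma meet_assoc: "a \<in> car \<Longrightarrow> b \<in> car \<Longrightarrow> c \<in> car \<Longrightarrow> meet a (meet b c) = meet (meet a b) c"
  and join_assoc: "a \<in> car \<Longrightarrow> b \<in> car \<Longrightarrow> c \<in> car \<Longrightarrow> join a (join b c) = join (join a b) c"
  and meet_comm: "a \<in> car \<Longrightarrow> b \<in> car \<Longrightarrow> meet a b = meet b a"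
  and join_comm: "a \<in> car \<Longrightarrow> b \<in> car \<Longrightarrow> join a b = join b a"
  and meet_join_absorb: "a \<in> car \<Longrightarrow> b \<in> car \<Longrightarrow> meet a (join a b) = a"
  and join_meet_absorb: "a \<in> car \<Longrightarrow> b \<in> car \<Longrightarrow> join a (meet a b) = a"
  and meet_top: "a \<in> car \<Longrightarrow> meet a tp = a"
  and join_bot: "a \<in> car \<Longrightarrow> join a bt = a"
  and le_imp_iff: "a \<in> car \<Longrightarrow> b \<in> car \<Longrightarrow> c \<in> car \<Longrightarrow> le (meet c a) b \<longleftrightarrow> le c (imp a b)"
  using heyting unfolding is_heyting_def by blast+

lemma meet_idem: "a \<in> car \<Longrightarrow> meet a a = a"
  by (metis meet_join_absorb join_meet_absorb closed(3))

lemma le_refl: "a \<in> car \<Longrightarrow> le a a"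
  by (simp add: hle_def meet_idem)

lemma le_antisym: "a \<in> car \<Longrightarrow> b \<in> car \<Longrightarrow> le a b \<Longrightarrow> le b a \<Longrightarrow> a = b"
  unfolding hle_def by (metis meet_comm)

lemma le_trans: "a \<in> car \<Longrightarrow> b \<in> car \<Longrightarrow> c \<in> car \<Longrightarrow> le a b \<Longrightarrow> le b c \<Longrightarrow> le a c"
  unfolding hle_def by (metis meet_assoc)

lemma le_iff_join: "a \<in> car \<Longrightarrow> b \<in> car \<Longrightarrow> le a b \<longleftrightarrow> join a b = b"
  unfolding hle_def by (metis meet_join_absorb join_meet_absorb join_comm meet_comm)

lemma meet_le1: "a \<in> car \<Longrightarrow> b \<in> car \<Longrightarrow> le (meet a b) a"
  unfolding hle_def by (metis meet_assoc meet_comm meet_idem)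

lemma meet_le2: "a \<in> car \<Longrightarrow> b \<in> car \<Longrightarrow> le (meet a b) b"
  by (metis meet_comm meet_le1)

lemma le_meet_iff:
  assumes "a \<in> car" "b \<in> car" "c \<in> car"
  shows "le c (meet a b) \<longleftrightarrow> le c a \<and> le c b"
proof
  assume "le c (meet a b)"
  then show "le c a \<and> le c b"
    using assms le_trans meet_le1 meet_le2 by (meson closed(3))
next
  assume "le c a \<and> le c b"
  then show "le c (meet a b)"
    using assms unfolding hle_def by (simp add: meet_assoc)
qed

lemma join_ge1: "a \<in> car \<Longrightarrow> b \<in> car \<Longrightarrow> le a (join a b)"
  by (metis join_assoc closed(4) le_iff_join le_refl)

lemma join_ge2: "a \<in> car \<Longrightarrow> b \<in> car \<Longrightarrow> le b (join a b)"
  by (metis join_comm join_ge1)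

lemma join_le_iff:
  assumes "a \<in> car" "b \<in> car" "c \<in> car"
  shows "le (join a b) c \<longleftrightarrow> le a c \<and> le b c"
proof
  assume "le (join a b) c"
  then show "le a c \<and> le b c"
    using assms le_trans join_ge1 join_ge2 by (meson closed(4))
next
  assume "le a c \<and> le b c"
  then show "le (join a b) c"
    using assms by (simp add: le_iff_join join_assoc [symmetric])
qed

lemma join_mono:
  "a \<in> car \<Longrightarrow> a' \<in> car \<Longrightarrow> b \<in> car \<Longrightarrow> b' \<in> car \<Longrightarrow> le a a' \<Longrightarrow> le b b' \<Longrightarrow>
    le (join a b) (join a' b')"
  by (meson closed(4) join_ge1 join_ge2 join_le_iff le_trans)

lemma le_top: "a \<in> car \<Longrightarrow> le a tp"
  by (simp add: hle_def meet_top)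

lemma bot_le: "a \<in> car \<Longrightarrow> le bt a"
  by (metis join_bot join_comm le_iff_join closed(2))

lemma meet_le_left: "a \<in> car \<Longrightarrow> b \<in> car \<Longrightarrow> c \<in> car \<Longrightarrow> le a c \<Longrightarrow> le (meet a b) c"
  by (meson closed(3) le_trans meet_le1)

lemma meet_le_right: "a \<in> car \<Longrightarrow> b \<in> car \<Longrightarrow> c \<in> car \<Longrightarrow> le b c \<Longrightarrow> le (meet a b) c"
  by (meson closed(3) le_trans meet_le2)

lemma join_meet_distrib_le:
  assumes "k \<in> car" "c \<in> car" "d \<in> car"
  shows "le (meet (join k c) (join k d)) (join k (meet c d))"
proof -
  let ?t = "join k (meet c d)"
  have k: "le k ?t" and cd: "le (meet c d) ?t"
    using assms join_ge1 join_ge2 by simp_all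
  have "le (meet k c) ?t" "le (meet d c) ?t"
    using assms k cd meet_le_left meet_comm[of d c] by simp_all
  then have "le (join k d) (imp c ?t)"
    using assms by (simp add: join_le_iff le_imp_iff)
  then have "le c (imp (join k d) ?t)"
    using assms by (simp add: le_imp_iff [symmetric] meet_comm)
  moreover have "le k (imp (join k d) ?t)"
    using assms k meet_le_left by (simp add: le_imp_iff [symmetric])
  ultimately show ?thesis
    using assms by (simp add: join_le_iff le_imp_iff)
qed

lemma meet_mono:
  assumes "a \<in> car" "a' \<in> car" "b \<in> car" "b' \<in> car" "le a a'" "le b b'"
  shows "le (meet a b) (meet a' b')"
  using assms meet_le_left[of a b a'] meet_le_right[of a b b'] le_meet_iff[of a' b' "meet a b"]
  by simp

lemma imp_meet_le: "a \<in> car \<Longrightarrow> b \<in> car \<Longrightarrow> le (meet (imp a b) a) b"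
  using le_imp_iff[of a b "imp a b"] le_refl by simp

lemma imp_self: "a \<in> car \<Longrightarrow> imp a a = tp"
  using le_imp_iff[of a a tp] meet_comm[of tp a] meet_top[of a] le_refl[of a] le_top
  by (simp add: le_antisym)

lemma imp_mono_right:
  assumes "a \<in> car" "b \<in> car" "b' \<in> car" "le b b'"
  shows "le (imp a b) (imp a b')"
proof -
  have "le (meet (imp a b) a) b'"
    using assms imp_meet_le le_trans[of _ b b'] by simp
  then show ?thesis
    using assms le_imp_iff by simp
qed

lemma imp_anti_left:
  assumes "a \<in> car" "a' \<in> car" "b \<in> car" "le a' a"
  shows "le (imp a b) (imp a' b)"
proof -
  have "le (meet (imp a b) a') (meet (imp a b) a)"
    using assms meet_mono le_refl by simp
  then have "le (meet (imp a b) a') b"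
    using assms imp_meet_le le_trans[of _ "meet (imp a b) a" b] by simp
  then show ?thesis
    using assms le_imp_iff by simp
qed

lemma imp_top_left: "b \<in> car \<Longrightarrow> imp tp b = b"
  using imp_meet_le[of tp b] meet_top[of "imp tp b"] le_imp_iff[of tp b b] meet_top[of b] le_refl[of b]
  by (simp add: le_antisym)

section \<open>Prime filters relative to a compatible preorder\<close>

definition is_filter :: "'a set \<Rightarrow> bool" where
  "is_filter F \<longleftrightarrow> F \<subseteq> car \<and> tp \<in> F \<and>
     (\<forall>x\<in>F. \<forall>y\<in>car. le x y \<longrightarrow> y \<in> F) \<and> (\<forall>x\<in>F. \<forall>y\<in>F. meet x y \<in> F)"

definition compatible_preorder :: "('a \<Rightarrow> 'a \<Rightarrow> bool) \<Rightarrow> bool" where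
  "compatible_preorder R \<longleftrightarrow>
     (\<forall>x\<in>car. \<forall>y\<in>car. le x y \<longrightarrow> R x y) \<and>
     (\<forall>x\<in>car. \<forall>y\<in>car. \<forall>z\<in>car. R x y \<longrightarrow> R y z \<longrightarrow> R x z) \<and>
     (\<forall>x\<in>car. \<forall>x'\<in>car. \<forall>y\<in>car. R x y \<longrightarrow> R x' y \<longrightarrow> R (join x x') y) \<and>
     (\<forall>x\<in>car. \<forall>y\<in>car. \<forall>y'\<in>car. R x y \<longrightarrow> R x y' \<longrightarrow> R x (meet y y'))"

definition rel_ideal :: "('a \<Rightarrow> 'a \<Rightarrow> bool) \<Rightarrow> 'a set \<Rightarrow> bool" where
  "rel_ideal R I \<longleftrightarrow> I \<subseteq> car \<and> bt \<in> I \<and>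
     (\<forall>x\<in>I. \<forall>y\<in>I. join x y \<in> I) \<and> (\<forall>x\<in>car. \<forall>y\<in>I. R x y \<longrightarrow> x \<in> I)"

definition rel_closed :: "('a \<Rightarrow> 'a \<Rightarrow> bool) \<Rightarrow> 'a set \<Rightarrow> bool" where
  "rel_closed R q \<longleftrightarrow> (\<forall>x\<in>car. \<forall>y\<in>car. R x y \<and> x \<in> q \<longrightarrow> y \<in> q)"

lemma rel_idealD:
  assumes "rel_ideal R I"
  shows "I \<subseteq> car" "bt \<in> I" "x \<in> I \<Longrightarrow> y \<in> I \<Longrightarrow> join x y \<in> I"
    "x \<in> car \<Longrightarrow> y \<in> I \<Longrightarrow> R x y \<Longrightarrow> x \<in> I"
  using assms unfolding rel_ideal_def by blast+

lemma is_filterD: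
  assumes "is_filter F"
  shows "F \<subseteq> car" "tp \<in> F" "x \<in> F \<Longrightarrow> y \<in> car \<Longrightarrow> le x y \<Longrightarrow> y \<in> F"
    "x \<in> F \<Longrightarrow> y \<in> F \<Longrightarrow> meet x y \<in> F"
  using assms unfolding is_filter_def by blast+

lemma compatible_preorder_le: "compatible_preorder le"
  unfolding compatible_preorder_def
  by (auto intro: le_trans simp: join_le_iff le_meet_iff)

context
  fixes R assumes R: "compatible_preorder R"
begin

lemma rel_of_le: "x \<in> car \<Longrightarrow> y \<in> car \<Longrightarrow> le x y \<Longrightarrow> R x y"
  and rel_trans: "x \<in> car \<Longrightarrow> y \<in> car \<Longrightarrow> z \<in> car \<Longrightarrow> R x y \<Longrightarrow> R y z \<Longrightarrow> R x z"
  and rel_join: "x \<in> car \<Longrightarrow> x' \<in> car \<Longrightarrow> y \<in> car \<Longrightarrow> R x y \<Longrightarrow> R x' y \<Longrightarrow> R (join x x') y"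
  and rel_meet: "x \<in> car \<Longrightarrow> y \<in> car \<Longrightarrow> y' \<in> car \<Longrightarrow> R x y \<Longrightarrow> R x y' \<Longrightarrow> R x (meet y y')"
  using R unfolding compatible_preorder_def by blast+

lemma rel_le_left: "x' \<in> car \<Longrightarrow> x \<in> car \<Longrightarrow> y \<in> car \<Longrightarrow> le x' x \<Longrightarrow> R x y \<Longrightarrow> R x' y"
  by (blast intro: rel_trans rel_of_le)

lemma rel_le_right: "x \<in> car \<Longrightarrow> y \<in> car \<Longrightarrow> y' \<in> car \<Longrightarrow> R x y \<Longrightarrow> le y y' \<Longrightarrow> R x y'"
  by (blast intro: rel_trans rel_of_le)

lemma rel_mono:
  "x' \<in> car \<Longrightarrow> x \<in> car \<Longrightarrow> y \<in> car \<Longrightarrow> y' \<in> car \<Longrightarrow> le x' x \<Longrightarrow> R x y \<Longrightarrow> le y y' \<Longrightarrow>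
    R x' y'"
  by (blast intro: rel_le_left rel_le_right)

lemma rel_ideal_Union:
  assumes "C \<noteq> {}" and ideals: "\<And>K. K \<in> C \<Longrightarrow> rel_ideal R K"
    and chain: "\<And>K K'. K \<in> C \<Longrightarrow> K' \<in> C \<Longrightarrow> K \<subseteq> K' \<or> K' \<subseteq> K"
  shows "rel_ideal R (\<Union>C)"
  unfolding rel_ideal_def
proof (intro conjI ballI impI)
  fix x y assume "x \<in> \<Union>C" "y \<in> \<Union>C"
  then obtain K K' where K: "K \<in> C" "K' \<in> C" "x \<in> K" "y \<in> K'" by blast
  then consider "x \<in> K'" | "y \<in> K"
    using chain by blast
  then show "join x y \<in> \<Union>C"
    by cases (use K ideals rel_idealD(3) in blast)+
next
  fix x y assume "x \<in> car" "y \<in> \<Union>C" "R x y"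
  then show "x \<in> \<Union>C"
    using ideals rel_idealD(4) by blast
next
  show "\<Union>C \<subseteq> car" "bt \<in> \<Union>C"
    using ideals \<open>C \<noteq> {}\<close> rel_idealD(1,2) by blast+
qed

lemma rel_ideal_adjoin:
  assumes K: "rel_ideal R K" and c: "c \<in> car"
  defines "K' \<equiv> {x\<in>car. \<exists>k\<in>K. R x (join k c)}"
  shows "rel_ideal R K'" "K \<subseteq> K'" "c \<in> K'"
proof -
  note Kc = rel_idealD(1,2)[OF K] and Kj = rel_idealD(3)[OF K]
  show "K \<subseteq> K'"
  proof
    fix k assume "k \<in> K"
    then have "k \<in> car" "R k (join k c)"
      using Kc c join_ge1 rel_of_le by auto
    with \<open>k \<in> K\<close> show "k \<in> K'"
      unfolding K'_def by blast
  qed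
  have "R c (join bt c)"
    using c join_ge2 rel_of_le by simp
  then show "c \<in> K'"
    unfolding K'_def using Kc c by blast
  show "rel_ideal R K'"
    unfolding rel_ideal_def
  proof (intro conjI ballI impI)
    show "K' \<subseteq> car" "bt \<in> K'"
      using \<open>K \<subseteq> K'\<close> Kc unfolding K'_def by auto
  next
    fix x y assume "x \<in> K'" "y \<in> K'"
    then obtain k k' where x: "x \<in> car" "k \<in> K" "R x (join k c)"
      and y: "y \<in> car" "k' \<in> K" "R y (join k' c)"
      unfolding K'_def by blast
    have kk': "k \<in> car" "k' \<in> car" using x y Kc by auto
    have "le (join k c) (join (join k k') c)" "le (join k' c) (join (join k k') c)"
      using c kk' join_ge1 join_ge2 join_mono le_refl by simp_all
    then have "R x (join (join k k') c)" "R y (join (join k k') c)"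
      using rel_le_right[OF x(1) _ _ x(3)] rel_le_right[OF y(1) _ _ y(3)] c kk' by simp_all
    then have "R (join x y) (join (join k k') c)"
      using x y c kk' rel_join by simp
    moreover have "join k k' \<in> K"
      using Kj x y by blast
    ultimately show "join x y \<in> K'"
      unfolding K'_def using x y by auto
  next
    fix x y assume x: "x \<in> car" and "y \<in> K'" and xy: "R x y"
    then obtain k where y: "y \<in> car" "k \<in> K" "R y (join k c)"
      unfolding K'_def by blast
    then have "R x (join k c)"
      using x xy c Kc rel_trans[of x y "join k c"] by auto
    with x y(2) show "x \<in> K'"
      unfolding K'_def by blast
  qed
qed

lemma prime_filter_compl:
  assumes K: "rel_ideal R K" and top: "tp \<notin> K"
    and prime: "\<And>c d. c \<in> car \<Longrightarrow> d \<in> car \<Longrightarrow> meet c d \<in> K \<Longrightarrow> c \<in> K \<or> d \<in> K"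
  shows "prime_filter A (car - K)" "rel_closed R (car - K)"
proof -
  note Kc = rel_idealD(1,2)[OF K] and Kj = rel_idealD(3)[OF K] and Kdown = rel_idealD(4)[OF K]
  show "prime_filter A (car - K)"
    unfolding prime_filter_def
  proof (intro conjI ballI impI)
    fix a b assume "a \<in> car - K" "b \<in> car" "le a b"
    then show "b \<in> car - K"
      using Kdown rel_of_le by blast
  next
    fix a b assume "a \<in> car - K" "b \<in> car - K"
    then show "meet a b \<in> car - K"
      using prime by auto
  qed (use top Kc Kj in auto)
  show "rel_closed R (car - K)"
    unfolding rel_closed_def using Kdown by blast
qed

lemma maximal_rel_ideal_exists:
  assumes I: "rel_ideal R I" and disj: "F \<inter> I = {}"
  obtains K where "rel_ideal R K" "I \<subseteq> K" "F \<inter> K = {}"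
    "\<And>K'. rel_ideal R K' \<Longrightarrow> K \<subseteq> K' \<Longrightarrow> F \<inter> K' = {} \<Longrightarrow> K' = K"
proof -
  define S where "S = {K. rel_ideal R K \<and> I \<subseteq> K \<and> F \<inter> K = {}}"
  have "\<exists>K\<in>S. \<forall>K'\<in>S. K \<subseteq> K' \<longrightarrow> K' = K"
  proof (rule subset_Zorn_nonempty)
    show "S \<noteq> {}" using I disj unfolding S_def by blast
  next
    fix C assume C: "C \<noteq> {}" "subset.chain S C"
    then have CS: "C \<subseteq> S" and chain: "\<forall>K\<in>C. \<forall>K'\<in>C. K \<subseteq> K' \<or> K' \<subseteq> K"
      unfolding subset.chain_def by auto
    have "rel_ideal R (\<Union>C)"
    proof (rule rel_ideal_Union[OF C(1)])
      show "\<And>K. K \<in> C \<Longrightarrow> rel_ideal R K"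
        using CS unfolding S_def by blast
      show "\<And>K K'. K \<in> C \<Longrightarrow> K' \<in> C \<Longrightarrow> K \<subseteq> K' \<or> K' \<subseteq> K"
        using chain by blast
    qed
    moreover have "I \<subseteq> \<Union>C" "F \<inter> \<Union>C = {}"
      using CS C(1) unfolding S_def by auto
    ultimately show "\<Union>C \<in> S"
      unfolding S_def by blast
  qed
  then obtain K where "K \<in> S" and maximal: "\<And>K'. K' \<in> S \<Longrightarrow> K \<subseteq> K' \<Longrightarrow> K' = K"
    by blast
  then have K: "rel_ideal R K" "I \<subseteq> K" "F \<inter> K = {}"
    unfolding S_def by blast+
  moreover have "K' = K" if "rel_ideal R K'" "K \<subseteq> K'" "F \<inter> K' = {}" for K'
    using maximal[of K'] that K(2) unfolding S_def by blast
  ultimately show thesis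
    using that by blast
qed

lemma maximal_rel_ideal_escape:
  assumes K: "rel_ideal R K"
    and max: "\<And>K'. rel_ideal R K' \<Longrightarrow> K \<subseteq> K' \<Longrightarrow> F \<inter> K' = {} \<Longrightarrow> K' = K"
    and x: "x \<in> car" "x \<notin> K"
  obtains f k where "f \<in> F" "k \<in> K" "R f (join k x)"
proof -
  define K' where "K' = {y\<in>car. \<exists>k\<in>K. R y (join k x)}"
  note adjoin = rel_ideal_adjoin[OF K x(1), folded K'_def]
  have "F \<inter> K' \<noteq> {}"
    using max[OF adjoin(1,2)] adjoin(3) x(2) by blast
  then show thesis
    using that unfolding K'_def by blast
qed

text \<open>If \<open>c, d \<notin> K\<close>, maximality provides \<open>f \<le>\<^sub>R k \<squnion> c\<close> and \<open>f' \<le>\<^sub>R k' \<squnion> d\<close> with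
  \<open>f, f' \<in> F\<close> and \<open>k, k' \<in> K\<close>, and distributivity gives
  \<open>f \<sqinter> f' \<le>\<^sub>R k \<squnion> k' \<squnion> (c \<sqinter> d) \<in> K\<close>.\<close>

lemma maximal_rel_ideal_prime:
  assumes F: "is_filter F" and K: "rel_ideal R K" "F \<inter> K = {}"
    and max: "\<And>K'. rel_ideal R K' \<Longrightarrow> K \<subseteq> K' \<Longrightarrow> F \<inter> K' = {} \<Longrightarrow> K' = K"
    and cd: "c \<in> car" "d \<in> car" "meet c d \<in> K"
  shows "c \<in> K \<or> d \<in> K"
proof -
  note Kc = rel_idealD(1)[OF K(1)] and Kj = rel_idealD(3)[OF K(1)]
    and Kdown = rel_idealD(4)[OF K(1)]
  show ?thesis
  proof (rule ccontr)
    assume "\<not> ?thesis"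
    then have "c \<notin> K" "d \<notin> K"
      by simp_all
    obtain f k where f: "f \<in> F" "k \<in> K" "R f (join k c)"
      using maximal_rel_ideal_escape[of K F c] K(1) max cd(1) \<open>c \<notin> K\<close> by blast
    obtain f' k' where f': "f' \<in> F" "k' \<in> K" "R f' (join k' d)"
      using maximal_rel_ideal_escape[of K F d] K(1) max cd(2) \<open>d \<notin> K\<close> by blast
    let ?k = "join k k'" and ?f = "meet f f'"
    have cc: "f \<in> car" "f' \<in> car" "k \<in> car" "k' \<in> car"
      using f f' is_filterD(1)[OF F] Kc by auto
    have "le (join k c) (join ?k c)" "le (join k' d) (join ?k d)"
      using cc cd join_ge1 join_ge2 join_mono le_refl by simp_all
    moreover have "le ?f f" "le ?f f'"
      using cc by (simp_all add: meet_le1 meet_le2)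
    ultimately have "R ?f (join ?k c)" "R ?f (join ?k d)"
      using rel_mono[OF _ _ _ _ _ f(3)] rel_mono[OF _ _ _ _ _ f'(3)] cc cd by simp_all
    then have meet: "R ?f (meet (join ?k c) (join ?k d))"
      using cc cd by (simp add: rel_meet)
    have "R ?f (join ?k (meet c d))"
      using rel_le_right[OF _ _ _ meet] cc cd join_meet_distrib_le by simp
    moreover have "join ?k (meet c d) \<in> K"
      using Kj[OF Kj[OF f(2) f'(2)] cd(3)] .
    ultimately have "?f \<in> K"
      using cc cd Kdown[of ?f "join ?k (meet c d)"] by simp
    then show False
      using K(2) is_filterD(4)[OF F] f f' by blast
  qed
qed

theorem prime_filter_extension:
  assumes F: "is_filter F" and I: "rel_ideal R I" and disj: "F \<inter> I = {}"
  obtains q where "prime_filter A q" "F \<subseteq> q" "q \<inter> I = {}" "rel_closed R q"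
proof -
  obtain K where K: "rel_ideal R K" "I \<subseteq> K" "F \<inter> K = {}"
    and max: "\<And>K'. rel_ideal R K' \<Longrightarrow> K \<subseteq> K' \<Longrightarrow> F \<inter> K' = {} \<Longrightarrow> K' = K"
    using maximal_rel_ideal_exists[OF I disj] by blast
  have "tp \<notin> K"
    using is_filterD(2)[OF F] K(3) by blast
  note compl = prime_filter_compl[OF K(1) this maximal_rel_ideal_prime[OF F K(1,3) max]]
  show thesis
  proof (rule that[OF compl(1) _ _ compl(2)])
    show "F \<subseteq> car - K" "(car - K) \<inter> I = {}"
      using is_filterD(1)[OF F] K by blast+
  qed
qed
end

lemma pfD:
  assumes "p \<in> pf A"
  shows "p \<subseteq> car" "tp \<in> p" "bt \<notin> p"
    "a \<in> p \<Longrightarrow> b \<in> car \<Longrightarrow> le a b \<Longrightarrow> b \<in> p"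
    "a \<in> p \<Longrightarrow> b \<in> p \<Longrightarrow> meet a b \<in> p"
    "a \<in> car \<Longrightarrow> b \<in> car \<Longrightarrow> join a b \<in> p \<Longrightarrow> a \<in> p \<or> b \<in> p"
  using assms unfolding pf_def prime_filter_def by blast+

lemma pf_is_filter: "p \<in> pf A \<Longrightarrow> is_filter p"
  unfolding is_filter_def by (intro conjI ballI impI) (simp_all add: pfD)

lemma pf_meet_iff:
  assumes p: "p \<in> pf A" and "a \<in> car" "b \<in> car"
  shows "meet a b \<in> p \<longleftrightarrow> a \<in> p \<and> b \<in> p"
proof
  assume "meet a b \<in> p"
  then show "a \<in> p \<and> b \<in> p"
    using assms pfD(4)[OF p] meet_le1 meet_le2 by simp
qed (use pfD(5)[OF p] in blast)

lemma pf_join_iff: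
  assumes p: "p \<in> pf A" and "a \<in> car" "b \<in> car"
  shows "join a b \<in> p \<longleftrightarrow> a \<in> p \<or> b \<in> p"
proof
  assume "a \<in> p \<or> b \<in> p"
  then show "join a b \<in> p"
    using assms pfD(4)[OF p] join_ge1 join_ge2 by auto
qed (use assms pfD(6) in blast)

lemma is_filter_principal: "a \<in> car \<Longrightarrow> is_filter {y\<in>car. le a y}"
  unfolding is_filter_def
  by (intro conjI ballI impI) (auto intro: le_trans le_top simp: le_meet_iff)

lemma prime_filter_separation:
  assumes a: "a \<in> car" and b: "b \<in> car" and nab: "\<not> le a b"
  obtains q where "q \<in> pf A" "a \<in> q" "b \<notin> q"
proof -
  let ?I = "{y\<in>car. le y b}"
  have "rel_ideal le ?I"
    unfolding rel_ideal_def
  proof (intro conjI ballI impI)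
    fix x y assume "x \<in> ?I" "y \<in> ?I"
    then show "join x y \<in> ?I"
      using b join_le_iff by simp
  next
    fix x y assume "x \<in> car" "y \<in> ?I" "le x y"
    then show "x \<in> ?I"
      using b le_trans[of x y b] by simp
  qed (use b bot_le in auto)
  moreover have "{y\<in>car. le a y} \<inter> ?I = {}"
    using a b nab le_trans[of a _ b] by auto
  ultimately obtain q where "prime_filter A q" "{y\<in>car. le a y} \<subseteq> q" "q \<inter> ?I = {}"
    by (rule prime_filter_extension[OF compatible_preorder_le is_filter_principal[OF a]])
  then show thesis
    using that a b le_refl unfolding pf_def by blast
qed

lemma tld_inj_on: "inj_on (tld A) car"
proof (rule inj_onI)
  have le: "le x y" if "x \<in> car" "y \<in> car" "tld A x \<subseteq> tld A y" for x y
  proof (rule ccontr)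
    assume "\<not> le x y"
    with that(1,2) obtain q where "q \<in> pf A" "x \<in> q" "y \<notin> q"
      by (rule prime_filter_separation)
    with that(3) show False
      unfolding tld_def by blast
  qed
  fix a b assume "a \<in> car" "b \<in> car" "tld A a = tld A b"
  then show "a = b"
    using le[of a b] le[of b a] le_antisym by simp
qed

section \<open>Weak implications\<close>

text \<open>The axioms of weak Heyting algebras (Celani and Jansana), that is, those of the Lewis arrow.\<close>

definition weak_implication :: "('a \<Rightarrow> 'a \<Rightarrow> 'a) \<Rightarrow> bool" where
  "weak_implication L \<longleftrightarrow> (\<forall>a\<in>car. \<forall>b\<in>car. L a b \<in> car) \<and>
     (\<forall>a\<in>car. \<forall>b\<in>car. \<forall>c\<in>car.
        meet (L a b) (L a c) = L a (meet b c) \<and> meet (L a c) (L b c) = L (join a b) c \<and>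
        le (meet (L a b) (L b c)) (L a c)) \<and>
     (\<forall>a\<in>car. L a a = tp)"

lemma imp_meet_distrib:
  assumes abc: "a \<in> car" "b \<in> car" "c \<in> car"
  shows "meet (imp a b) (imp a c) = imp a (meet b c)"
proof (rule le_antisym)
  let ?x = "meet (imp a b) (imp a c)"
  have "le (meet ?x a) (meet (imp a b) a)" "le (meet ?x a) (meet (imp a c) a)"
    using abc meet_mono[OF _ _ _ _ meet_le1 le_refl] meet_mono[OF _ _ _ _ meet_le2 le_refl]
    by simp_all
  then have "le (meet ?x a) b" "le (meet ?x a) c"
    using abc le_trans[OF _ _ _ _ imp_meet_le] by simp_all
  then have "le (meet ?x a) (meet b c)"
    using abc le_meet_iff[of b c "meet ?x a"] by simp
  then show "le ?x (imp a (meet b c))"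
    using abc le_imp_iff[of a "meet b c" ?x] by simp
  have "le (imp a (meet b c)) (imp a b)" "le (imp a (meet b c)) (imp a c)"
    using abc imp_mono_right[OF _ _ _ meet_le1] imp_mono_right[OF _ _ _ meet_le2] by simp_all
  then show "le (imp a (meet b c)) ?x"
    using abc le_meet_iff[of "imp a b" "imp a c"] by simp
qed (use abc in simp_all)

lemma imp_join_distrib:
  assumes abc: "a \<in> car" "b \<in> car" "c \<in> car"
  shows "meet (imp a c) (imp b c) = imp (join a b) c"
proof (rule le_antisym)
  let ?x = "meet (imp a c) (imp b c)"
  have "le (meet ?x a) (meet (imp a c) a)" "le (meet ?x b) (meet (imp b c) b)"
    using abc meet_mono[OF _ _ _ _ meet_le1 le_refl] meet_mono[OF _ _ _ _ meet_le2 le_refl]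
    by simp_all
  then have "le (meet ?x a) c" "le (meet ?x b) c"
    using abc le_trans[OF _ _ _ _ imp_meet_le] by simp_all
  then have "le a (imp ?x c)" "le b (imp ?x c)"
    using abc le_imp_iff[of ?x c a] le_imp_iff[of ?x c b] meet_comm[of _ ?x] by simp_all
  then have "le (join a b) (imp ?x c)"
    using abc join_le_iff[of a b "imp ?x c"] by simp
  then have "le (meet ?x (join a b)) c"
    using abc le_imp_iff[of ?x c "join a b"] meet_comm[of ?x "join a b"] by simp
  then show "le ?x (imp (join a b) c)"
    using abc le_imp_iff[of "join a b" c ?x] by simp
  have "le (imp (join a b) c) (imp a c)" "le (imp (join a b) c) (imp b c)"
    using abc imp_anti_left[OF _ _ _ join_ge1] imp_anti_left[OF _ _ _ join_ge2] by simp_all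
  then show "le (imp (join a b) c) ?x"
    using abc le_meet_iff[of "imp a c" "imp b c"] by simp
qed (use abc in simp_all)

lemma imp_trans_le:
  assumes abc: "a \<in> car" "b \<in> car" "c \<in> car"
  shows "le (meet (imp a b) (imp b c)) (imp a c)"
proof -
  let ?x = "meet (imp a b) (imp b c)"
  have "le (meet ?x a) (meet (imp a b) a)"
    using abc meet_mono[OF _ _ _ _ meet_le1 le_refl] by simp
  then have "le (meet ?x a) b"
    using abc le_trans[OF _ _ _ _ imp_meet_le] by simp
  moreover have "le (meet ?x a) (imp b c)"
    using abc meet_le_left[OF _ _ _ meet_le2] by simp
  ultimately have "le (meet ?x a) (meet (imp b c) b)"
    using abc le_meet_iff[of "imp b c" b "meet ?x a"] by simp
  then have "le (meet ?x a) c"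
    using abc le_trans[OF _ _ _ _ imp_meet_le] by simp
  then show ?thesis
    using abc le_imp_iff[of a c ?x] by simp
qed

lemma weak_implication_imp: "weak_implication imp"
  unfolding weak_implication_def
proof (intro conjI ballI)
  fix a b c assume "a \<in> car" "b \<in> car" "c \<in> car"
  then show "meet (imp a b) (imp a c) = imp a (meet b c)"
    and "meet (imp a c) (imp b c) = imp (join a b) c"
    and "le (meet (imp a b) (imp b c)) (imp a c)"
    by (rule imp_meet_distrib imp_join_distrib imp_trans_le)+
qed (rule closed(5) imp_self; assumption)+

context
  fixes L assumes L: "weak_implication L"
begin

lemma weak_implication_closed: "a \<in> car \<Longrightarrow> b \<in> car \<Longrightarrow> L a b \<in> car"
  and weak_implication_meet:
    "a \<in> car \<Longrightarrow> b \<in> car \<Longrightarrow> c \<in> car \<Longrightarrow> meet (L a b) (L a c) = L a (meet b c)"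
  and weak_implication_join:
    "a \<in> car \<Longrightarrow> b \<in> car \<Longrightarrow> c \<in> car \<Longrightarrow> meet (L a c) (L b c) = L (join a b) c"
  and weak_implication_trans:
    "a \<in> car \<Longrightarrow> b \<in> car \<Longrightarrow> c \<in> car \<Longrightarrow> le (meet (L a b) (L b c)) (L a c)"
  and weak_implication_self: "a \<in> car \<Longrightarrow> L a a = tp"
  using L unfolding weak_implication_def by blast+

lemma weak_implication_le:
  assumes "a \<in> car" "b \<in> car" "le a b"
  shows "L a b = tp"
proof -
  have "L a a = meet (L a a) (L a b)"
    using assms weak_implication_meet[of a a b] unfolding hle_def by simp
  then show ?thesis
    using assms weak_implication_self meet_comm meet_top weak_implication_closed by metis
qed

lemma compatible_preorder_weak_implication:
  assumes p: "is_filter p"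
  shows "compatible_preorder (\<lambda>a b. L a b \<in> p)"
  unfolding compatible_preorder_def
proof (intro conjI ballI impI)
  fix x y assume "x \<in> car" "y \<in> car" "le x y"
  then show "L x y \<in> p"
    using is_filterD(2)[OF p] weak_implication_le by simp
next
  fix x y z assume xyz: "x \<in> car" "y \<in> car" "z \<in> car" "L x y \<in> p" "L y z \<in> p"
  then have "meet (L x y) (L y z) \<in> p"
    using is_filterD(4)[OF p] by blast
  then show "L x z \<in> p"
    using xyz is_filterD(3)[OF p] weak_implication_trans weak_implication_closed by simp
next
  fix x x' y assume "x \<in> car" "x' \<in> car" "y \<in> car" "L x y \<in> p" "L x' y \<in> p"
  then show "L (join x x') y \<in> p"
    using is_filterD(4)[OF p] weak_implication_join by metis
next
  fix x y y' assume "x \<in> car" "y \<in> car" "y' \<in> car" "L x y \<in> p" "L x y' \<in> p"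
  then show "L x (meet y y') \<in> p"
    using is_filterD(4)[OF p] weak_implication_meet by metis
qed

lemma rel_ideal_weak_implication:
  assumes p: "p \<in> pf A" and b: "b \<in> car"
  shows "rel_ideal (\<lambda>u v. L u v \<in> p) {y\<in>car. L y b \<in> p}"
  unfolding rel_ideal_def
proof (intro conjI ballI impI)
  show "bt \<in> {y\<in>car. L y b \<in> p}"
    using b pfD(2)[OF p] bot_le weak_implication_le by simp
next
  fix x y assume "x \<in> {y\<in>car. L y b \<in> p}" "y \<in> {y\<in>car. L y b \<in> p}"
  then have "meet (L x b) (L y b) \<in> p" "x \<in> car" "y \<in> car"
    using pfD(5)[OF p] by auto
  then show "join x y \<in> {y\<in>car. L y b \<in> p}"
    using b weak_implication_join[of x y b] by simp
next
  fix x y assume "x \<in> car" "y \<in> {y\<in>car. L y b \<in> p}" "L x y \<in> p"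
  then show "x \<in> {y\<in>car. L y b \<in> p}"
    using b rel_trans[OF compatible_preorder_weak_implication[OF pf_is_filter[OF p]], of x y b]
    by simp
qed auto

theorem weak_implication_mem_iff:
  assumes p: "p \<in> pf A" and a: "a \<in> car" and b: "b \<in> car"
  shows "L a b \<in> p \<longleftrightarrow> (\<forall>q\<in>pf A. rel_closed (\<lambda>u v. L u v \<in> p) q \<longrightarrow> a \<in> q \<longrightarrow> b \<in> q)"
proof (intro iffI ballI impI)
  fix q assume "L a b \<in> p" "rel_closed (\<lambda>u v. L u v \<in> p) q" "a \<in> q"
  then show "b \<in> q"
    using a b unfolding rel_closed_def by blast
next
  assume separates: "\<forall>q\<in>pf A. rel_closed (\<lambda>u v. L u v \<in> p) q \<longrightarrow> a \<in> q \<longrightarrow> b \<in> q"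
  let ?R = "\<lambda>u v. L u v \<in> p" and ?I = "{y\<in>car. L y b \<in> p}"
  have R: "compatible_preorder ?R"
    using compatible_preorder_weak_implication pf_is_filter[OF p] .
  show "L a b \<in> p"
  proof (rule ccontr)
    assume "L a b \<notin> p"
    then have "{y\<in>car. le a y} \<inter> ?I = {}"
      using a b rel_le_left[OF R, of a _ b] by blast
    then obtain q where q: "prime_filter A q" "{y\<in>car. le a y} \<subseteq> q" "q \<inter> ?I = {}"
      "rel_closed ?R q"
      by (rule prime_filter_extension[OF R is_filter_principal[OF a]
            rel_ideal_weak_implication[OF p b]])
    have "q \<in> pf A"
      using q(1) unfolding pf_def by simp
    moreover have "a \<in> q" "b \<notin> q"
      using q(2,3) a b le_refl weak_implication_self pfD(2)[OF p] by auto
    ultimately show False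
      using separates q(4) by blast
  qed
qed
end

lemma rel_closed_imp_iff:
  assumes p: "p \<in> pf A" and q: "q \<in> pf A"
  shows "rel_closed (\<lambda>u v. imp u v \<in> p) q \<longleftrightarrow> p \<subseteq> q"
proof
  assume q_closed: "rel_closed (\<lambda>u v. imp u v \<in> p) q"
  show "p \<subseteq> q"
  proof
    fix v assume "v \<in> p"
    then have "imp tp v \<in> p" "v \<in> car"
      using pfD(1)[OF p] imp_top_left by auto
    then show "v \<in> q"
      using q_closed pfD(2)[OF q] closed(1) unfolding rel_closed_def by blast
  qed
next
  assume "p \<subseteq> q"
  then show "rel_closed (\<lambda>u v. imp u v \<in> p) q"
    unfolding rel_closed_def
    using pfD(4,5)[OF q] imp_meet_le pfD(1)[OF q] by (meson closed(3,5) subsetD)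
qed

section \<open>The dual frame of a Heyting-Lewis algebra\<close>

lemma tld_top: "tld A tp = pf A"
  and tld_bot: "tld A bt = {}"
  unfolding tld_def using pfD(2,3) by auto

lemma tld_meet: "a \<in> car \<Longrightarrow> b \<in> car \<Longrightarrow> tld A (meet a b) = tld A a \<inter> tld A b"
  unfolding tld_def using pf_meet_iff by auto

lemma tld_join: "a \<in> car \<Longrightarrow> b \<in> car \<Longrightarrow> tld A (join a b) = tld A a \<union> tld A b"
  unfolding tld_def using pf_join_iff by auto

lemma tld_imp:
  assumes a: "a \<in> car" and b: "b \<in> car"
  shows "tld A (imp a b) = fimp (dual_frame A) (tld A a) (tld A b)"
proof (rule set_eqI)
  fix p
  show "p \<in> tld A (imp a b) \<longleftrightarrow> p \<in> fimp (dual_frame A) (tld A a) (tld A b)"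
  proof (cases "p \<in> pf A")
    case True
    then show ?thesis
      using weak_implication_mem_iff[OF weak_implication_imp True a b] rel_closed_imp_iff[OF True]
      unfolding tld_def fimp_def by auto
  qed (simp add: tld_def fimp_def)
qed

definition entailed_filter :: "'a set \<Rightarrow> 'a set" where
  "entailed_filter G = {x\<in>car. \<exists>G'. finite G' \<and> G' \<subseteq> G \<and> (\<forall>p\<in>pf A. G' \<subseteq> p \<longrightarrow> x \<in> p)}"

definition entailed_ideal :: "'a set \<Rightarrow> 'a set" where
  "entailed_ideal H = {x\<in>car. \<exists>H'. finite H' \<and> H' \<subseteq> H \<and> (\<forall>p\<in>pf A. x \<in> p \<longrightarrow> H' \<inter> p \<noteq> {})}"

lemma subset_entailed_filter: "G \<subseteq> car \<Longrightarrow> G \<subseteq> entailed_filter G"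
  unfolding entailed_filter_def by (intro subsetI CollectI conjI exI[of _ "{_}"]) auto

lemma subset_entailed_ideal: "H \<subseteq> car \<Longrightarrow> H \<subseteq> entailed_ideal H"
  unfolding entailed_ideal_def by (intro subsetI CollectI conjI exI[of _ "{_}"]) auto

lemma is_filter_entailed_filter: "is_filter (entailed_filter G)"
  unfolding is_filter_def
proof (intro conjI ballI impI)
  show "entailed_filter G \<subseteq> car"
    unfolding entailed_filter_def by blast
  show "tp \<in> entailed_filter G"
    unfolding entailed_filter_def using pfD(2) by (intro CollectI conjI exI[of _ "{}"]) simp_all
next
  fix x y assume "x \<in> entailed_filter G" and y: "y \<in> car" "le x y"
  then obtain G' where G': "finite G'" "G' \<subseteq> G" "\<forall>p\<in>pf A. G' \<subseteq> p \<longrightarrow> x \<in> p"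
    unfolding entailed_filter_def by blast
  have "y \<in> p" if "p \<in> pf A" "G' \<subseteq> p" for p
    using pfD(4)[OF that(1) _ y] G'(3) that by blast
  then show "y \<in> entailed_filter G"
    unfolding entailed_filter_def using y G' by (intro CollectI conjI exI[of _ G']) simp_all
next
  fix x y assume "x \<in> entailed_filter G" "y \<in> entailed_filter G"
  then obtain G1 G2 where G1: "finite G1" "G1 \<subseteq> G" "\<forall>p\<in>pf A. G1 \<subseteq> p \<longrightarrow> x \<in> p"
    and G2: "finite G2" "G2 \<subseteq> G" "\<forall>p\<in>pf A. G2 \<subseteq> p \<longrightarrow> y \<in> p"
    and xy: "x \<in> car" "y \<in> car"
    unfolding entailed_filter_def by blast
  have "meet x y \<in> p" if "p \<in> pf A" "G1 \<union> G2 \<subseteq> p" for p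
    using pfD(5)[OF that(1)] G1(3) G2(3) that by blast
  then show "meet x y \<in> entailed_filter G"
    unfolding entailed_filter_def using xy G1 G2
    by (intro CollectI conjI exI[of _ "G1 \<union> G2"]) simp_all
qed

lemma rel_ideal_entailed_ideal: "rel_ideal le (entailed_ideal H)"
  unfolding rel_ideal_def
proof (intro conjI ballI impI)
  show "entailed_ideal H \<subseteq> car"
    unfolding entailed_ideal_def by blast
  show "bt \<in> entailed_ideal H"
    unfolding entailed_ideal_def using pfD(3) by (intro CollectI conjI exI[of _ "{}"]) simp_all
next
  fix x y assume "x \<in> entailed_ideal H" "y \<in> entailed_ideal H"
  then obtain H1 H2 where H1: "finite H1" "H1 \<subseteq> H" "\<forall>p\<in>pf A. x \<in> p \<longrightarrow> H1 \<inter> p \<noteq> {}"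
    and H2: "finite H2" "H2 \<subseteq> H" "\<forall>p\<in>pf A. y \<in> p \<longrightarrow> H2 \<inter> p \<noteq> {}"
    and xy: "x \<in> car" "y \<in> car"
    unfolding entailed_ideal_def by blast
  have "(H1 \<union> H2) \<inter> p \<noteq> {}" if "p \<in> pf A" "join x y \<in> p" for p
  proof -
    have "x \<in> p \<or> y \<in> p"
      using pfD(6)[OF that(1) xy that(2)] .
    then show ?thesis
      using H1(3) H2(3) that(1) by blast
  qed
  then show "join x y \<in> entailed_ideal H"
    unfolding entailed_ideal_def using xy H1 H2
    by (intro CollectI conjI exI[of _ "H1 \<union> H2"]) simp_all
next
  fix x y assume "x \<in> car" "y \<in> entailed_ideal H" "le x y"
  then obtain H' where "finite H'" "H' \<subseteq> H" "\<forall>p\<in>pf A. y \<in> p \<longrightarrow> H' \<inter> p \<noteq> {}" "y \<in> car"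
    unfolding entailed_ideal_def by blast
  moreover from this have "\<forall>p\<in>pf A. x \<in> p \<longrightarrow> H' \<inter> p \<noteq> {}"
    using pfD(4) \<open>x \<in> car\<close> \<open>le x y\<close> by blast
  ultimately show "x \<in> entailed_ideal H"
    unfolding entailed_ideal_def using \<open>x \<in> car\<close> by (intro CollectI conjI exI[of _ H']) simp_all
qed

lemma fip_entailed_disjoint:
  assumes fip: "fip (dual_frame A) S"
    and G: "tld A ` G \<subseteq> S" and H: "(\<lambda>b. pf A - tld A b) ` H \<subseteq> S"
  shows "entailed_filter G \<inter> entailed_ideal H = {}"
proof (rule ccontr)
  assume "entailed_filter G \<inter> entailed_ideal H \<noteq> {}"
  then obtain x where "x \<in> entailed_filter G" "x \<in> entailed_ideal H"
    by blast
  then obtain G' H' where G': "finite G'" "G' \<subseteq> G" "\<forall>p\<in>pf A. G' \<subseteq> p \<longrightarrow> x \<in> p"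
    and H': "finite H'" "H' \<subseteq> H" "\<forall>p\<in>pf A. x \<in> p \<longrightarrow> H' \<inter> p \<noteq> {}"
    unfolding entailed_filter_def entailed_ideal_def by blast
  let ?T = "tld A ` G' \<union> (\<lambda>b. pf A - tld A b) ` H'"
  have "?T \<subseteq> S"
    using G'(2) H'(2) G H by blast
  moreover have "finite ?T"
    using G'(1) H'(1) by simp
  ultimately have "pf A \<inter> \<Inter>?T \<noteq> {}"
    using fip[unfolded fip_def, rule_format, of ?T] by simp
  then obtain p where p: "p \<in> pf A" "p \<in> \<Inter>?T"
    by blast
  have "G' \<subseteq> p"
  proof
    fix a assume "a \<in> G'"
    then have "p \<in> tld A a"
      using p(2) by blast
    then show "a \<in> p"
      unfolding tld_def by simp
  qed
  then obtain b where "b \<in> H'" "b \<in> p"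
    using G'(3) H'(3) p(1) by blast
  then have "p \<notin> tld A b"
    using p(2) by blast
  with \<open>b \<in> p\<close> p(1) show False
    unfolding tld_def by simp
qed

end

locale hl_alg =
  fixes A :: "'a hla"
  assumes hla: "is_hla A"

sublocale hl_alg \<subseteq> heyting_alg
proof
  show "is_heyting A"
    using hla unfolding is_hla_def by blast
qed

context hl_alg
begin

lemma weak_implication_lew: "weak_implication lew"
  using hla unfolding is_hla_def weak_implication_def by simp

lemma pf_sq_iff: "pf_sq A p q \<longleftrightarrow> p \<in> pf A \<and> q \<in> pf A \<and> rel_closed (\<lambda>u v. lew u v \<in> p) q"
  unfolding pf_sq_def rel_closed_def by blast

lemma tld_lew:
  assumes a: "a \<in> car" and b: "b \<in> car"
  shows "tld A (lew a b) = flew (dual_frame A) (tld A a) (tld A b)"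
proof (rule set_eqI)
  fix p
  show "p \<in> tld A (lew a b) \<longleftrightarrow> p \<in> flew (dual_frame A) (tld A a) (tld A b)"
  proof (cases "p \<in> pf A")
    case True
    then show ?thesis
      using weak_implication_mem_iff[OF weak_implication_lew True a b]
      by (auto simp: tld_def flew_def pf_sq_iff)
  qed (simp add: tld_def flew_def)
qed

lemma dual_lew_frame: "lew_frame (dual_frame A)"
  unfolding lew_frame_def
proof (intro conjI allI impI ballI)
  fix p q r assume "fle (dual_frame A) p q \<and> fsq (dual_frame A) q r"
  then have "p \<in> pf A" "p \<subseteq> q" "pf_sq A q r"
    by simp_all
  then show "fsq (dual_frame A) p r"
    unfolding dual_frame_simps pf_sq_iff rel_closed_def by blast
next
  fix p q assume "fsq (dual_frame A) p q"
  then show "p \<in> pts (dual_frame A)" "q \<in> pts (dual_frame A)"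
    unfolding dual_frame_simps pf_sq_iff by blast+
qed auto

lemma dual_general_frame: "general_frame (dual_frame A)"
  unfolding general_frame_def
proof (intro conjI ballI)
  show "lew_frame (dual_frame A)"
    by (rule dual_lew_frame)
  show "pts (dual_frame A) \<in> adm (dual_frame A)" "{} \<in> adm (dual_frame A)"
    using imageI[OF closed(1), of "tld A"] imageI[OF closed(2), of "tld A"] tld_top tld_bot
    by simp_all
next
  fix s assume "s \<in> adm (dual_frame A)"
  then obtain a where "s = tld A a"
    by auto
  then show "is_upset (dual_frame A) s"
    by (auto simp: is_upset_def tld_def)
next
  fix s t assume "s \<in> adm (dual_frame A)" "t \<in> adm (dual_frame A)"
  then obtain a b where ab: "a \<in> car" "b \<in> car" "s = tld A a" "t = tld A b"
    by auto
  then have "s \<inter> t = tld A (meet a b)" "s \<union> t = tld A (join a b)"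
    "fimp (dual_frame A) s t = tld A (imp a b)" "flew (dual_frame A) s t = tld A (lew a b)"
    using tld_meet tld_join tld_imp tld_lew by simp_all
  then show "s \<inter> t \<in> adm (dual_frame A)" "s \<union> t \<in> adm (dual_frame A)"
    "fimp (dual_frame A) s t \<in> adm (dual_frame A)" "flew (dual_frame A) s t \<in> adm (dual_frame A)"
    using ab by simp_all
qed


lemma dual_compact: "compact_frame (dual_frame A)"
  unfolding compact_frame_def
proof (intro allI impI, elim conjE)
  fix S assume S: "S \<subseteq> adm (dual_frame A) \<union> {pts (dual_frame A) - s |s. s \<in> adm (dual_frame A)}"
    and fip: "fip (dual_frame A) S"
  define G where "G = {a\<in>car. tld A a \<in> S}"
  define H where "H = {b\<in>car. pf A - tld A b \<in> S}"
  have "entailed_filter G \<inter> entailed_ideal H = {}"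
    using fip by (rule fip_entailed_disjoint) (auto simp: G_def H_def)
  then obtain q where q: "prime_filter A q" "entailed_filter G \<subseteq> q" "q \<inter> entailed_ideal H = {}"
    by (rule prime_filter_extension[OF compatible_preorder_le is_filter_entailed_filter
          rel_ideal_entailed_ideal])
  have "G \<subseteq> car" "H \<subseteq> car"
    unfolding G_def H_def by blast+
  then have G: "G \<subseteq> q" and H: "H \<inter> q = {}"
    using q(2,3) subset_entailed_filter[of G] subset_entailed_ideal[of H] by blast+
  have "q \<in> pf A"
    using q(1) unfolding pf_def by simp
  have "q \<in> s" if "s \<in> S" for s
  proof -
    have "s \<in> tld A ` car \<or> (\<exists>t\<in>tld A ` car. s = pf A - t)"
      using S that by auto
    then consider a where "a \<in> car" "s = tld A a" | b where "b \<in> car" "s = pf A - tld A b"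
      by blast
    then show ?thesis
    proof cases
      case (1 a)
      with that have "a \<in> G"
        unfolding G_def by simp
      with G \<open>q \<in> pf A\<close> show ?thesis
        unfolding 1 tld_def by blast
    next
      case (2 b)
      with that have "b \<in> H"
        unfolding H_def by simp
      with H \<open>q \<in> pf A\<close> show ?thesis
        unfolding 2 tld_def by blast
    qed
  qed
  with \<open>q \<in> pf A\<close> show "pts (dual_frame A) \<inter> \<Inter>S \<noteq> {}"
    by auto
qed

lemma dual_descriptive: "descriptive_frame (dual_frame A)"
  unfolding descriptive_frame_def
proof (intro conjI ballI impI)
  show "general_frame (dual_frame A)"
    by (rule dual_general_frame)
  show "compact_frame (dual_frame A)"
    by (rule dual_compact)
next
  fix p q assume pq: "p \<in> pts (dual_frame A)" "q \<in> pts (dual_frame A)" "\<not> fle (dual_frame A) p q"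
  then obtain a where "a \<in> car" "a \<in> p" "a \<notin> q"
    using pfD(1) by auto
  with pq show "\<exists>s\<in>adm (dual_frame A). p \<in> s \<and> q \<notin> s"
    by (intro bexI[of _ "tld A a"]) (auto simp: tld_def)
next
  fix p q assume pq: "p \<in> pts (dual_frame A)" "q \<in> pts (dual_frame A)" "\<not> fsq (dual_frame A) p q"
  then obtain a b where ab: "a \<in> car" "b \<in> car" "lew a b \<in> p" "a \<in> q" "b \<notin> q"
    unfolding dual_frame_simps pf_sq_def by blast
  then have "p \<in> flew (dual_frame A) (tld A a) (tld A b)" "q \<in> tld A a" "q \<notin> tld A b"
    using pq tld_lew[OF ab(1,2), symmetric] by (simp_all add: tld_def)
  with ab show "\<exists>s\<in>adm (dual_frame A). \<exists>t\<in>adm (dual_frame A).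
      p \<in> flew (dual_frame A) s t \<and> q \<in> s \<and> q \<notin> t"
    by auto
qed

lemma hla_hom_eta: "hla_hom A (cplx_alg (dual_frame A)) (eta A)"
  unfolding hla_hom_def eta_def cplx_alg_simps dual_frame_simps
  using tld_top tld_bot tld_meet tld_join tld_imp tld_lew by simp

lemma hla_iso_eta: "hla_iso A (cplx_alg (dual_frame A)) (eta A)"
proof (rule hla_iso_if_bij[OF heyting hla_hom_eta])
  show "bij_betw (eta A) car (hcar (cplx_alg (dual_frame A)))"
    unfolding eta_def using tld_inj_on by (simp add: inj_on_imp_bij_betw)
qed

end

section \<open>Dual morphisms\<close>

locale hla_morphism = A: hl_alg A + B: hl_alg B
  for A :: "'a hla" and B :: "'b hla" +
  fixes h :: "'a \<Rightarrow> 'b"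
  assumes hom: "hla_hom A B h"
begin

lemma hom_closed: "a \<in> A.car \<Longrightarrow> h a \<in> B.car"
  and hom_top: "h A.tp = B.tp"
  and hom_bot: "h A.bt = B.bt"
  and hom_meet: "a \<in> A.car \<Longrightarrow> b \<in> A.car \<Longrightarrow> h (A.meet a b) = B.meet (h a) (h b)"
  and hom_join: "a \<in> A.car \<Longrightarrow> b \<in> A.car \<Longrightarrow> h (A.join a b) = B.join (h a) (h b)"
  and hom_imp: "a \<in> A.car \<Longrightarrow> b \<in> A.car \<Longrightarrow> h (A.imp a b) = B.imp (h a) (h b)"
  and hom_lew: "a \<in> A.car \<Longrightarrow> b \<in> A.car \<Longrightarrow> h (A.lew a b) = B.lew (h a) (h b)"
  using hom unfolding hla_hom_def by blast+

lemma hom_le: "a \<in> A.car \<Longrightarrow> b \<in> A.car \<Longrightarrow> A.le a b \<Longrightarrow> B.le (h a) (h b)"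
  unfolding hle_def by (metis hom_meet)

abbreviation "dh \<equiv> dual_hom A h"

lemma dual_hom_pf:
  assumes q: "q \<in> pf B"
  shows "dh q \<in> pf A"
  unfolding pf_def mem_Collect_eq prime_filter_def
proof (intro conjI ballI impI)
  show "dh q \<subseteq> A.car" "A.tp \<in> dh q" "A.bt \<notin> dh q"
    unfolding dual_hom_def using B.pfD(2,3)[OF q] hom_top hom_bot by auto
next
  fix a b assume "a \<in> dh q" "b \<in> A.car" "A.le a b"
  then show "b \<in> dh q"
    unfolding dual_hom_def using B.pfD(4)[OF q] hom_le hom_closed by auto
next
  fix a b assume "a \<in> dh q" "b \<in> dh q"
  then show "A.meet a b \<in> dh q"
    unfolding dual_hom_def using B.pfD(5)[OF q] hom_meet by auto
next
  fix a b assume "a \<in> A.car" "b \<in> A.car" "A.join a b \<in> dh q"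
  then show "a \<in> dh q \<or> b \<in> dh q"
    unfolding dual_hom_def using B.pfD(6)[OF q] hom_join hom_closed by auto
qed

lemma dual_hom_preimage_tld:
  assumes "a \<in> A.car"
  shows "{q\<in>pf B. dh q \<in> tld A a} = tld B (h a)"
  using assms dual_hom_pf unfolding tld_def dual_hom_def by auto

lemma is_filter_hom_generated:
  assumes z: "z \<in> pf A"
  shows "B.is_filter {y\<in>B.car. \<exists>a\<in>z. B.le (h a) y}"
  unfolding B.is_filter_def
proof (intro conjI ballI impI)
  note zc = A.pfD(1)[OF z]
  show "B.tp \<in> {y\<in>B.car. \<exists>a\<in>z. B.le (h a) y}"
    using A.pfD(2)[OF z] hom_top B.le_refl[OF B.closed(1)] by force
next
  fix u v assume "u \<in> {y\<in>B.car. \<exists>a\<in>z. B.le (h a) y}" and v: "v \<in> B.car" "B.le u v"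
  then obtain a where a: "a \<in> z" "B.le (h a) u" "u \<in> B.car"
    by blast
  then have "B.le (h a) v"
    using B.le_trans[OF hom_closed _ v(1) _ v(2)] A.pfD(1)[OF z] by blast
  with a(1) v(1) show "v \<in> {y\<in>B.car. \<exists>a\<in>z. B.le (h a) y}"
    by blast
next
  fix u v assume "u \<in> {y\<in>B.car. \<exists>a\<in>z. B.le (h a) y}" "v \<in> {y\<in>B.car. \<exists>a\<in>z. B.le (h a) y}"
  then obtain a a' where a: "a \<in> z" "B.le (h a) u" "u \<in> B.car"
    and a': "a' \<in> z" "B.le (h a') v" "v \<in> B.car"
    by blast
  moreover have "a \<in> A.car" "a' \<in> A.car"
    using A.pfD(1)[OF z] a a' by auto
  ultimately have "B.le (h (A.meet a a')) (B.meet u v)"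
    using hom_meet[of a a'] hom_closed[of a] hom_closed[of a'] B.meet_mono[of "h a" u "h a'" v]
    by simp
  moreover have "A.meet a a' \<in> z"
    using A.pfD(5)[OF z] a a' by blast
  ultimately show "B.meet u v \<in> {y\<in>B.car. \<exists>a\<in>z. B.le (h a) y}"
    using a(3) a'(3) by auto
qed blast

context
  fixes LA LB
  assumes LA: "A.weak_implication LA" and LB: "B.weak_implication LB"
    and preserves: "\<And>a b. a \<in> A.car \<Longrightarrow> b \<in> A.car \<Longrightarrow> h (LA a b) = LB (h a) (h b)"
begin

lemma dual_hom_rel_closed:
  assumes "B.rel_closed (\<lambda>u v. LB u v \<in> x) y"
  shows "A.rel_closed (\<lambda>u v. LA u v \<in> dh x) (dh y)"
  using assms hom_closed preserves unfolding A.rel_closed_def B.rel_closed_def dual_hom_def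
  by auto

lemma rel_ideal_below_hom_compl:
  assumes x: "x \<in> pf B" and z: "z \<in> pf A"
  shows "B.rel_ideal (\<lambda>u v. LB u v \<in> x) {y\<in>B.car. \<exists>c\<in>A.car - z. LB y (h c) \<in> x}"
    (is "B.rel_ideal ?R ?I")
  unfolding B.rel_ideal_def
proof (intro conjI ballI impI)
  have R: "B.compatible_preorder ?R"
    using B.compatible_preorder_weak_implication[OF LB B.pf_is_filter[OF x]] .
  have "LB B.bt (h A.bt) \<in> x"
    using hom_bot B.weak_implication_self[OF LB] B.pfD(2)[OF x] by simp
  then show "B.bt \<in> ?I"
    using A.pfD(3)[OF z] by auto
next
  fix u v assume "u \<in> ?I" "v \<in> ?I"
  then obtain c c' where c: "c \<in> A.car" "c \<notin> z" "LB u (h c) \<in> x" "u \<in> B.car"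
    and c': "c' \<in> A.car" "c' \<notin> z" "LB v (h c') \<in> x" "v \<in> B.car"
    by blast
  have R: "B.compatible_preorder ?R"
    using B.compatible_preorder_weak_implication[OF LB B.pf_is_filter[OF x]] .
  have "B.le (h c) (h (A.join c c'))" "B.le (h c') (h (A.join c c'))"
    using c c' hom_join hom_closed B.join_ge1 B.join_ge2 by simp_all
  then have "LB u (h (A.join c c')) \<in> x" "LB v (h (A.join c c')) \<in> x"
    using B.rel_le_right[OF R c(4) _ _ c(3)] B.rel_le_right[OF R c'(4) _ _ c'(3)] c c' hom_closed
    by simp_all
  then have "LB (B.join u v) (h (A.join c c')) \<in> x"
    using B.rel_join[OF R] c c' hom_closed by simp
  moreover have "A.join c c' \<notin> z"
    using A.pfD(6)[OF z] c c' by blast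
  ultimately show "B.join u v \<in> ?I"
    using c c' by auto
next
  fix u v assume u: "u \<in> B.car" and "v \<in> ?I" and uv: "LB u v \<in> x"
  then obtain c where c: "c \<in> A.car" "c \<notin> z" "LB v (h c) \<in> x" "v \<in> B.car"
    by blast
  have R: "B.compatible_preorder ?R"
    using B.compatible_preorder_weak_implication[OF LB B.pf_is_filter[OF x]] .
  have "LB u (h c) \<in> x"
    by (rule B.rel_trans[OF R u c(4) hom_closed[OF c(1)] uv c(3)])
  with u c(1,2) show "u \<in> ?I"
    by blast
qed blast

lemma hom_generated_disjoint:
  assumes x: "x \<in> pf B" and z: "z \<in> pf A" and closed: "A.rel_closed (\<lambda>u v. LA u v \<in> dh x) z"
  shows "{y\<in>B.car. \<exists>a\<in>z. B.le (h a) y} \<inter> {y\<in>B.car. \<exists>c\<in>A.car - z. LB y (h c) \<in> x} = {}"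
proof (rule ccontr)
  have R: "B.compatible_preorder (\<lambda>u v. LB u v \<in> x)"
    using B.compatible_preorder_weak_implication[OF LB B.pf_is_filter[OF x]] .
  assume "{y\<in>B.car. \<exists>a\<in>z. B.le (h a) y} \<inter> {y\<in>B.car. \<exists>c\<in>A.car - z. LB y (h c) \<in> x} \<noteq> {}"
  then obtain y a c where y: "y \<in> B.car" "a \<in> z" "B.le (h a) y" "c \<in> A.car" "c \<notin> z"
    "LB y (h c) \<in> x"
    by blast
  have a: "a \<in> A.car"
    using y(2) A.pfD(1)[OF z] by blast
  have "LB (h a) (h c) \<in> x"
    using B.rel_le_left[OF R hom_closed[OF a] y(1) hom_closed[OF y(4)] y(3) y(6)] .
  then have "LA a c \<in> dh x"
    using a y(4) preserves A.weak_implication_closed[OF LA] unfolding dual_hom_def by simp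
  then have "c \<in> z"
    using closed a y(2,4) unfolding A.rel_closed_def by blast
  with y(5) show False ..
qed

lemma dual_hom_lift:
  assumes x: "x \<in> pf B" and z: "z \<in> pf A" and closed: "A.rel_closed (\<lambda>u v. LA u v \<in> dh x) z"
  obtains w where "w \<in> pf B" "B.rel_closed (\<lambda>u v. LB u v \<in> x) w" "dh w = z"
proof -
  let ?R = "\<lambda>u v. LB u v \<in> x"
  let ?F = "{y\<in>B.car. \<exists>a\<in>z. B.le (h a) y}"
  let ?I = "{y\<in>B.car. \<exists>c\<in>A.car - z. LB y (h c) \<in> x}"
  note zc = A.pfD(1)[OF z]
  have R: "B.compatible_preorder ?R"
    using B.compatible_preorder_weak_implication[OF LB B.pf_is_filter[OF x]] .
  obtain w where w: "prime_filter B w" "?F \<subseteq> w" "w \<inter> ?I = {}" "B.rel_closed ?R w"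
    by (rule B.prime_filter_extension[OF R is_filter_hom_generated[OF z]
          rel_ideal_below_hom_compl[OF x z] hom_generated_disjoint[OF x z closed]])
  have "dh w = z"
  proof (intro set_eqI iffI)
    fix a assume "a \<in> z"
    then have "h a \<in> ?F"
      using zc hom_closed B.le_refl by blast
    with \<open>a \<in> z\<close> show "a \<in> dh w"
      using w(2) zc unfolding dual_hom_def by blast
  next
    fix a assume a: "a \<in> dh w"
    show "a \<in> z"
    proof (rule ccontr)
      assume "a \<notin> z"
      moreover have "LB (h a) (h a) \<in> x"
        using a hom_closed B.weak_implication_self[OF LB] B.pfD(2)[OF x]
        unfolding dual_hom_def by simp
      ultimately have "h a \<in> ?I"
        using a hom_closed unfolding dual_hom_def by blast
      with a w(3) show False
        unfolding dual_hom_def by blast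
    qed
  qed
  with w show thesis
    using that unfolding pf_def by blast
qed

end

lemma dual_hom_mor: "dframe_mor (dual_frame B) (dual_frame A) dh"
  unfolding dframe_mor_def bounded_for_def
proof (intro conjI allI impI ballI)
  fix x assume "x \<in> pts (dual_frame B)"
  then show "dh x \<in> pts (dual_frame A)"
    using dual_hom_pf by simp
next
  fix x y assume "fle (dual_frame B) x y"
  then show "fle (dual_frame A) (dh x) (dh y)"
    using dual_hom_pf unfolding dual_hom_def by auto
next
  fix x z assume x: "x \<in> pts (dual_frame B)" and "fle (dual_frame A) (dh x) z"
  then have "x \<in> pf B" "z \<in> pf A" "dh x \<subseteq> z"
    by simp_all
  then have "A.rel_closed (\<lambda>u v. A.imp u v \<in> dh x) z"
    using A.rel_closed_imp_iff dual_hom_pf by blast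
  then obtain w where "w \<in> pf B" "B.rel_closed (\<lambda>u v. B.imp u v \<in> x) w" "dh w = z"
    using dual_hom_lift[OF A.weak_implication_imp B.weak_implication_imp hom_imp]
      \<open>x \<in> pf B\<close> \<open>z \<in> pf A\<close> by blast
  with \<open>x \<in> pf B\<close> show "\<exists>w. fle (dual_frame B) x w \<and> dh w = z"
    using B.rel_closed_imp_iff by auto
next
  fix x y assume "fsq (dual_frame B) x y"
  then show "fsq (dual_frame A) (dh x) (dh y)"
    using dual_hom_rel_closed[OF A.weak_implication_lew B.weak_implication_lew hom_lew]
      dual_hom_pf unfolding dual_frame_simps A.pf_sq_iff B.pf_sq_iff by blast
next
  fix x z assume "x \<in> pts (dual_frame B)" "fsq (dual_frame A) (dh x) z"
  then have "x \<in> pf B" "z \<in> pf A" "A.rel_closed (\<lambda>u v. A.lew u v \<in> dh x) z"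
    unfolding dual_frame_simps A.pf_sq_iff by simp_all
  then obtain w where "w \<in> pf B" "B.rel_closed (\<lambda>u v. B.lew u v \<in> x) w" "dh w = z"
    using dual_hom_lift[OF A.weak_implication_lew B.weak_implication_lew hom_lew] by blast
  with \<open>x \<in> pf B\<close> show "\<exists>w. fsq (dual_frame B) x w \<and> dh w = z"
    unfolding dual_frame_simps B.pf_sq_iff by blast
next
  fix s assume "s \<in> adm (dual_frame A)"
  then obtain a where "a \<in> A.car" "s = tld A a"
    by auto
  then show "{x \<in> pts (dual_frame B). dh x \<in> s} \<in> adm (dual_frame B)"
    using dual_hom_preimage_tld hom_closed by simp
qed

lemma dual_hom_eta:
  "a \<in> A.car \<Longrightarrow> cplx_hom (dual_frame B) dh (eta A a) = eta B (h a)"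
  unfolding cplx_hom_def eta_def using dual_hom_preimage_tld by simp

end

section \<open>Complex algebras of general frames\<close>

lemma cplx_hom_rel_box:
  assumes maps: "\<forall>x\<in>pts X. f x \<in> pts Y" and bounded: "bounded_for X Y R S f"
    and dom: "\<And>x y. R x y \<Longrightarrow> y \<in> pts X"
  shows "cplx_hom X f {u\<in>pts Y. \<forall>v\<in>pts Y. S u v \<and> v \<in> a \<longrightarrow> v \<in> b} =
    {x\<in>pts X. \<forall>y\<in>pts X. R x y \<and> y \<in> cplx_hom X f a \<longrightarrow> y \<in> cplx_hom X f b}"
proof (intro set_eqI iffI)
  fix x assume "x \<in> cplx_hom X f {u\<in>pts Y. \<forall>v\<in>pts Y. S u v \<and> v \<in> a \<longrightarrow> v \<in> b}"
  then have x: "x \<in> pts X" "\<forall>v\<in>pts Y. S (f x) v \<and> v \<in> a \<longrightarrow> v \<in> b"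
    unfolding cplx_hom_def by simp_all
  have "y \<in> cplx_hom X f b" if "y \<in> pts X" "R x y" "y \<in> cplx_hom X f a" for y
    using that x(2) maps bounded unfolding bounded_for_def cplx_hom_def by simp
  with x(1) show "x \<in> {x\<in>pts X. \<forall>y\<in>pts X. R x y \<and> y \<in> cplx_hom X f a \<longrightarrow> y \<in> cplx_hom X f b}"
    by blast
next
  fix x assume "x \<in> {x\<in>pts X. \<forall>y\<in>pts X. R x y \<and> y \<in> cplx_hom X f a \<longrightarrow> y \<in> cplx_hom X f b}"
  then have x: "x \<in> pts X" "\<forall>y\<in>pts X. R x y \<and> y \<in> cplx_hom X f a \<longrightarrow> y \<in> cplx_hom X f b"
    by simp_all
  have "v \<in> b" if v: "v \<in> pts Y" "S (f x) v" "v \<in> a" for v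
  proof -
    obtain y where "R x y" "f y = v"
      using bounded x(1) v(2) unfolding bounded_for_def by blast
    with dom x(2) v(3) show ?thesis
      unfolding cplx_hom_def by auto
  qed
  with x(1) maps show "x \<in> cplx_hom X f {u\<in>pts Y. \<forall>v\<in>pts Y. S u v \<and> v \<in> a \<longrightarrow> v \<in> b}"
    unfolding cplx_hom_def by blast
qed

locale gen_frame =
  fixes X :: "'x gframe"
  assumes general: "general_frame X"
begin

lemma fle_pts: "fle X x y \<Longrightarrow> x \<in> pts X \<and> y \<in> pts X"
  and fsq_pts: "fsq X x y \<Longrightarrow> x \<in> pts X \<and> y \<in> pts X"
  and fle_refl: "x \<in> pts X \<Longrightarrow> fle X x x"
  and fle_antisym: "fle X x y \<Longrightarrow> fle X y x \<Longrightarrow> x = y"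
  using general unfolding general_frame_def lew_frame_def by blast+

lemma adm_upset: "a \<in> adm X \<Longrightarrow> is_upset X a"
  and adm_pts: "pts X \<in> adm X"
  and adm_empty: "{} \<in> adm X"
  and adm_Int: "a \<in> adm X \<Longrightarrow> b \<in> adm X \<Longrightarrow> a \<inter> b \<in> adm X"
  and adm_Un: "a \<in> adm X \<Longrightarrow> b \<in> adm X \<Longrightarrow> a \<union> b \<in> adm X"
  and adm_fimp: "a \<in> adm X \<Longrightarrow> b \<in> adm X \<Longrightarrow> fimp X a b \<in> adm X"
  and adm_flew: "a \<in> adm X \<Longrightarrow> b \<in> adm X \<Longrightarrow> flew X a b \<in> adm X"
  using general unfolding general_frame_def by blast+

lemma adm_subset: "a \<in> adm X \<Longrightarrow> a \<subseteq> pts X"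
  using adm_upset unfolding is_upset_def by blast

lemma adm_up: "a \<in> adm X \<Longrightarrow> x \<in> a \<Longrightarrow> fle X x y \<Longrightarrow> y \<in> a"
  using adm_upset fle_pts unfolding is_upset_def by blast

lemma Int_subset_fimp_iff:
  assumes a: "a \<in> adm X" and c: "c \<in> adm X"
  shows "c \<inter> a \<subseteq> b \<longleftrightarrow> c \<subseteq> fimp X a b"
proof
  assume "c \<inter> a \<subseteq> b"
  then show "c \<subseteq> fimp X a b"
    unfolding fimp_def using adm_subset[OF c] adm_up[OF c] by blast
next
  assume "c \<subseteq> fimp X a b"
  then show "c \<inter> a \<subseteq> b"
    unfolding fimp_def using adm_subset[OF c] fle_refl by blast
qed

lemma is_heyting_cplx_alg: "is_heyting (cplx_alg X)"
  unfolding is_heyting_def cplx_alg_simps hle_cplx_alg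
proof (intro conjI ballI)
  fix a b c assume abc: "a \<in> adm X" "b \<in> adm X" "c \<in> adm X"
  show "c \<inter> a \<subseteq> b \<longleftrightarrow> c \<subseteq> fimp X a b"
    using Int_subset_fimp_iff abc by blast
next
  fix a assume "a \<in> adm X"
  then show "a \<inter> pts X = a"
    using adm_subset by blast
qed (use adm_pts adm_empty adm_Int adm_Un adm_fimp adm_flew in auto)

lemma is_hla_cplx_alg: "is_hla (cplx_alg X)"
  unfolding is_hla_def cplx_alg_simps hle_cplx_alg
proof (intro conjI ballI)
  show "is_heyting (cplx_alg X)"
    by (rule is_heyting_cplx_alg)
qed (auto simp: flew_def)

end

locale frame_morphism = X: gen_frame X + Y: gen_frame Y
  for X :: "'x gframe" and Y :: "'y gframe" +
  fixes f :: "'x \<Rightarrow> 'y"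
  assumes mor: "dframe_mor X Y f"
begin

lemma maps: "\<forall>x\<in>pts X. f x \<in> pts Y"
  and bounded_fle: "bounded_for X Y (fle X) (fle Y) f"
  and bounded_fsq: "bounded_for X Y (fsq X) (fsq Y) f"
  and adm_preimage: "a \<in> adm Y \<Longrightarrow> {x\<in>pts X. f x \<in> a} \<in> adm X"
  using mor unfolding dframe_mor_def by blast+

lemma hla_hom_cplx_hom: "hla_hom (cplx_alg Y) (cplx_alg X) (cplx_hom X f)"
  unfolding hla_hom_def cplx_alg_simps
proof (intro conjI ballI)
  fix a b
  show "cplx_hom X f (fimp Y a b) = fimp X (cplx_hom X f a) (cplx_hom X f b)"
    unfolding fimp_def using cplx_hom_rel_box[OF maps bounded_fle] X.fle_pts by blast
  show "cplx_hom X f (flew Y a b) = flew X (cplx_hom X f a) (cplx_hom X f b)"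
    unfolding flew_def using cplx_hom_rel_box[OF maps bounded_fsq] X.fsq_pts by blast
qed (use maps adm_preimage in \<open>auto simp: cplx_hom_def\<close>)

end

section \<open>Descriptive frames\<close>

lemma dframe_mor_if_bij:
  assumes X: "general_frame X" and Y: "general_frame Y"
    and bij: "bij_betw f (pts X) (pts Y)"
    and fle: "\<And>x y. x \<in> pts X \<Longrightarrow> y \<in> pts X \<Longrightarrow> fle Y (f x) (f y) \<longleftrightarrow> fle X x y"
    and fsq: "\<And>x y. x \<in> pts X \<Longrightarrow> y \<in> pts X \<Longrightarrow> fsq Y (f x) (f y) \<longleftrightarrow> fsq X x y"
    and adm: "\<And>b. b \<in> adm Y \<Longrightarrow> {x\<in>pts X. f x \<in> b} \<in> adm X"
  shows "dframe_mor X Y f"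
proof -
  interpret X: gen_frame X by (rule gen_frame.intro[OF X])
  interpret Y: gen_frame Y by (rule gen_frame.intro[OF Y])
  define g where "g = inv_into (pts X) f"
  have g: "g z \<in> pts X" and fg: "f (g z) = z" if "z \<in> pts Y" for z
    using bij that unfolding g_def by (auto simp: bij_betw_def inv_into_into f_inv_into_f)
  show ?thesis
    unfolding dframe_mor_def bounded_for_def
  proof (intro conjI allI impI ballI)
    fix x y assume "fle X x y"
    then show "fle Y (f x) (f y)"
      using X.fle_pts fle by blast
  next
    fix x y assume "fsq X x y"
    then show "fsq Y (f x) (f y)"
      using X.fsq_pts fsq by blast
  next
    fix x z assume "x \<in> pts X" "fle Y (f x) z"
    then show "\<exists>y. fle X x y \<and> f y = z"
      using Y.fle_pts fle[of x "g z"] g fg by metis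
  next
    fix x z assume "x \<in> pts X" "fsq Y (f x) z"
    then show "\<exists>y. fsq X x y \<and> f y = z"
      using Y.fsq_pts fsq[of x "g z"] g fg by metis
  next
    fix x assume "x \<in> pts X"
    then show "f x \<in> pts Y"
      using bij unfolding bij_betw_def by blast
  next
    fix b assume "b \<in> adm Y"
    then show "{x\<in>pts X. f x \<in> b} \<in> adm X"
      by (rule adm)
  qed
qed

lemma dframe_iso_if_bij:
  assumes X: "general_frame X" and Y: "general_frame Y"
    and bij: "bij_betw f (pts X) (pts Y)"
    and fle: "\<And>x y. x \<in> pts X \<Longrightarrow> y \<in> pts X \<Longrightarrow> fle Y (f x) (f y) \<longleftrightarrow> fle X x y"
    and fsq: "\<And>x y. x \<in> pts X \<Longrightarrow> y \<in> pts X \<Longrightarrow> fsq Y (f x) (f y) \<longleftrightarrow> fsq X x y"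
    and adm: "(\<lambda>b. {x\<in>pts X. f x \<in> b}) ` adm Y = adm X"
  shows "dframe_iso X Y f"
proof -
  interpret Y: gen_frame Y by (rule gen_frame.intro[OF Y])
  define g where "g = inv_into (pts X) f"
  have g: "bij_betw g (pts Y) (pts X)"
    unfolding g_def by (rule bij_betw_inv_into[OF bij])
  have gf: "g (f x) = x" if "x \<in> pts X" for x
    using bij that unfolding g_def by (simp add: bij_betw_inv_into_left)
  have gY: "g y \<in> pts X" and fg: "f (g y) = y" if "y \<in> pts Y" for y
    using bij that unfolding g_def by (auto simp: bij_betw_def inv_into_into f_inv_into_f)
  have "dframe_mor X Y f"
  proof (rule dframe_mor_if_bij[OF X Y bij fle fsq])
    fix b assume "b \<in> adm Y"
    then have "(\<lambda>b. {x\<in>pts X. f x \<in> b}) b \<in> adm X"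
      unfolding adm[symmetric] by (rule imageI)
    then show "{x\<in>pts X. f x \<in> b} \<in> adm X"
      by simp
  qed
  moreover have "dframe_mor Y X g"
  proof (rule dframe_mor_if_bij[OF Y X g])
    show "fle X (g y) (g y') \<longleftrightarrow> fle Y y y'" if "y \<in> pts Y" "y' \<in> pts Y" for y y'
      using that fle[of "g y" "g y'"] gY fg by simp
    show "fsq X (g y) (g y') \<longleftrightarrow> fsq Y y y'" if "y \<in> pts Y" "y' \<in> pts Y" for y y'
      using that fsq[of "g y" "g y'"] gY fg by simp
  next
    fix a assume "a \<in> adm X"
    then obtain b where b: "b \<in> adm Y" "a = {x\<in>pts X. f x \<in> b}"
      using adm by blast
    then have "{y\<in>pts Y. g y \<in> a} = b"
      using Y.adm_subset[OF b(1)] gY fg by auto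
    with b(1) show "{y\<in>pts Y. g y \<in> a} \<in> adm Y"
      by simp
  qed
  ultimately show ?thesis
    unfolding dframe_iso_def using gf fg by blast
qed

locale desc_frame = gen_frame +
  assumes descriptive: "descriptive_frame X"
begin

lemma compact: "S \<subseteq> adm X \<union> {pts X - a |a. a \<in> adm X} \<Longrightarrow> fip X S \<Longrightarrow> pts X \<inter> \<Inter>S \<noteq> {}"
  using descriptive unfolding descriptive_frame_def compact_frame_def by blast

lemma fle_refined: "x \<in> pts X \<Longrightarrow> y \<in> pts X \<Longrightarrow> \<not> fle X x y \<Longrightarrow> \<exists>a\<in>adm X. x \<in> a \<and> y \<notin> a"
  using descriptive unfolding descriptive_frame_def by blast

lemma fsq_refined: "x \<in> pts X \<Longrightarrow> y \<in> pts X \<Longrightarrow> \<not> fsq X x y \<Longrightarrow>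
    \<exists>a\<in>adm X. \<exists>b\<in>adm X. x \<in> flew X a b \<and> y \<in> a \<and> y \<notin> b"
  using descriptive unfolding descriptive_frame_def by blast

lemma pf_cplx_alg_iff: "q \<in> pf (cplx_alg X) \<longleftrightarrow> q \<subseteq> adm X \<and> pts X \<in> q \<and> {} \<notin> q \<and>
     (\<forall>a\<in>q. \<forall>b\<in>adm X. a \<subseteq> b \<longrightarrow> b \<in> q) \<and> (\<forall>a\<in>q. \<forall>b\<in>q. a \<inter> b \<in> q) \<and>
     (\<forall>a\<in>adm X. \<forall>b\<in>adm X. a \<union> b \<in> q \<longrightarrow> a \<in> q \<or> b \<in> q)"
  unfolding pf_def prime_filter_def cplx_alg_simps hle_cplx_alg by simp

lemma pf_cplx_algD:
  assumes "q \<in> pf (cplx_alg X)"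
  shows "q \<subseteq> adm X" "pts X \<in> q" "{} \<notin> q"
    "\<And>a b. a \<in> q \<Longrightarrow> b \<in> adm X \<Longrightarrow> a \<subseteq> b \<Longrightarrow> b \<in> q"
    "\<And>a b. a \<in> q \<Longrightarrow> b \<in> q \<Longrightarrow> a \<inter> b \<in> q"
    "\<And>a b. a \<in> adm X \<Longrightarrow> b \<in> adm X \<Longrightarrow> a \<union> b \<in> q \<Longrightarrow> a \<in> q \<or> b \<in> q"
  using assms unfolding pf_cplx_alg_iff by simp_all

lemma epsilon_pf: "x \<in> pts X \<Longrightarrow> epsilon X x \<in> pf (cplx_alg X)"
  unfolding pf_cplx_alg_iff epsilon_def using adm_pts adm_empty adm_Int by auto

lemma fle_iff_epsilon:
  assumes "x \<in> pts X" "y \<in> pts X"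
  shows "fle X x y \<longleftrightarrow> epsilon X x \<subseteq> epsilon X y"
proof
  assume "fle X x y"
  then show "epsilon X x \<subseteq> epsilon X y"
    unfolding epsilon_def using adm_up by blast
next
  assume "epsilon X x \<subseteq> epsilon X y"
  then show "fle X x y"
    using fle_refined[OF assms] unfolding epsilon_def by blast
qed

lemma fsq_iff_epsilon:
  assumes x: "x \<in> pts X" and y: "y \<in> pts X"
  shows "fsq X x y \<longleftrightarrow> pf_sq (cplx_alg X) (epsilon X x) (epsilon X y)"
proof -
  have "fsq X x y \<longleftrightarrow>
      (\<forall>a\<in>adm X. \<forall>b\<in>adm X. flew X a b \<in> epsilon X x \<and> a \<in> epsilon X y \<longrightarrow> b \<in> epsilon X y)"
  proof
    assume "fsq X x y"
    then show "\<forall>a\<in>adm X. \<forall>b\<in>adm X. flew X a b \<in> epsilon X x \<and> a \<in> epsilon X y \<longrightarrow> b \<in> epsilon X y"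
      using y unfolding epsilon_def flew_def by blast
  next
    assume "\<forall>a\<in>adm X. \<forall>b\<in>adm X. flew X a b \<in> epsilon X x \<and> a \<in> epsilon X y \<longrightarrow> b \<in> epsilon X y"
    then show "fsq X x y"
      using fsq_refined[OF x y] adm_flew unfolding epsilon_def by blast
  qed
  then show ?thesis
    unfolding pf_sq_def cplx_alg_simps using epsilon_pf x y by simp
qed

lemma inj_on_epsilon: "inj_on (epsilon X) (pts X)"
  by (rule inj_onI) (metis fle_iff_epsilon fle_antisym order_refl)

lemma prime_filter_complements_bound:
  assumes q: "q \<in> pf (cplx_alg X)"
    and "finite F" "F \<subseteq> q \<union> {pts X - a |a. a \<in> adm X \<and> a \<notin> q}" (is "_ \<subseteq> ?S")
  shows "\<exists>a\<in>q. \<exists>b\<in>adm X. b \<notin> q \<and> a - b \<subseteq> pts X \<inter> \<Inter>F"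
  using assms(2,3)
proof (induction F rule: finite_induct)
  case empty
  show ?case
    using pf_cplx_algD(2,3)[OF q] adm_empty by (intro bexI[of _ "pts X"] bexI[of _ "{}"]) auto
next
  case (insert s F)
  then have "F \<subseteq> ?S" "s \<in> ?S"
    by simp_all
  then obtain a b where ab: "a \<in> q" "b \<in> adm X" "b \<notin> q" "a - b \<subseteq> pts X \<inter> \<Inter>F"
    using insert.IH by blast
  have "s \<in> q \<or> (\<exists>c. s = pts X - c \<and> c \<in> adm X \<and> c \<notin> q)"
    using \<open>s \<in> ?S\<close> by simp
  then consider "s \<in> q" | c where "s = pts X - c" "c \<in> adm X" "c \<notin> q"
    by blast
  then show ?case
  proof cases
    case 1
    have "a \<inter> s \<in> q"
      using pf_cplx_algD(5)[OF q ab(1) 1] .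
    moreover have "a \<inter> s - b \<subseteq> pts X \<inter> \<Inter>(insert s F)"
      using ab(4) by blast
    ultimately show ?thesis
      using ab(2,3) by (intro bexI[of _ "a \<inter> s"] bexI[of _ b]) simp_all
  next
    case (2 c)
    have "b \<union> c \<in> adm X"
      using adm_Un[OF ab(2) 2(2)] .
    moreover have "b \<union> c \<notin> q"
      using pf_cplx_algD(6)[OF q ab(2) 2(2)] ab(3) 2(3) by blast
    moreover have "a - (b \<union> c) \<subseteq> pts X \<inter> \<Inter>(insert s F)"
      using ab(4) 2(1) by blast
    ultimately show ?thesis
      using ab(1) by (intro bexI[of _ a] bexI[of _ "b \<union> c"]) simp_all
  qed
qed

lemma fip_prime_filter_complements:
  assumes q: "q \<in> pf (cplx_alg X)"
  shows "fip X (q \<union> {pts X - a |a. a \<in> adm X \<and> a \<notin> q})"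
  unfolding fip_def
proof (intro allI impI, elim conjE)
  fix F assume F: "F \<subseteq> q \<union> {pts X - a |a. a \<in> adm X \<and> a \<notin> q}" "finite F"
  obtain a b where ab: "a \<in> q" "b \<in> adm X" "b \<notin> q" "a - b \<subseteq> pts X \<inter> \<Inter>F"
    using prime_filter_complements_bound[OF q F(2,1)] by blast
  show "pts X \<inter> \<Inter>F \<noteq> {}"
  proof
    assume "pts X \<inter> \<Inter>F = {}"
    then have "a \<subseteq> b"
      using ab(4) by blast
    with ab show False
      using pf_cplx_algD(4)[OF q] by blast
  qed
qed

lemma epsilon_surj:
  assumes q: "q \<in> pf (cplx_alg X)"
  obtains x where "x \<in> pts X" "epsilon X x = q"
proof -
  note qadm = pf_cplx_algD(1)[OF q]
  define S where "S = q \<union> {pts X - a |a. a \<in> adm X \<and> a \<notin> q}"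
  have "fip X S"
    unfolding S_def by (rule fip_prime_filter_complements[OF q])
  moreover have "S \<subseteq> adm X \<union> {pts X - a |a. a \<in> adm X}"
    unfolding S_def using qadm by blast
  ultimately have "pts X \<inter> \<Inter>S \<noteq> {}"
    by (rule compact[rotated])
  then obtain x where x: "x \<in> pts X" "x \<in> \<Inter>S"
    by blast
  have "epsilon X x = q"
  proof (intro set_eqI iffI)
    fix a assume "a \<in> epsilon X x"
    then have a: "a \<in> adm X" "x \<in> a"
      unfolding epsilon_def by simp_all
    show "a \<in> q"
    proof (rule ccontr)
      assume "a \<notin> q"
      with a(1) have "pts X - a \<in> S"
        unfolding S_def by blast
      with x a(2) show False
        by blast
    qed
  next
    fix a assume "a \<in> q"
    with x qadm show "a \<in> epsilon X x"
      unfolding S_def epsilon_def by blast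
  qed
  with x(1) show thesis
    by (rule that)
qed

lemma preimage_epsilon_tld: "a \<in> adm X \<Longrightarrow> {x\<in>pts X. epsilon X x \<in> tld (cplx_alg X) a} = a"
  unfolding tld_def using epsilon_pf adm_subset by (auto simp: epsilon_def)

lemma dframe_iso_epsilon: "dframe_iso X (dual_frame (cplx_alg X)) (epsilon X)"
proof (rule dframe_iso_if_bij[OF general hl_alg.dual_general_frame])
  show "hl_alg (cplx_alg X)"
    by (rule hl_alg.intro[OF is_hla_cplx_alg])
  have "pf (cplx_alg X) \<subseteq> epsilon X ` pts X"
  proof
    fix q assume "q \<in> pf (cplx_alg X)"
    then obtain x where "x \<in> pts X" "epsilon X x = q"
      by (rule epsilon_surj)
    then show "q \<in> epsilon X ` pts X"
      by blast
  qed
  with epsilon_pf show "bij_betw (epsilon X) (pts X) (pts (dual_frame (cplx_alg X)))"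
    unfolding bij_betw_def dual_frame_simps using inj_on_epsilon by blast
  show "fle (dual_frame (cplx_alg X)) (epsilon X x) (epsilon X y) \<longleftrightarrow> fle X x y"
    if "x \<in> pts X" "y \<in> pts X" for x y
    using that fle_iff_epsilon epsilon_pf by simp
  show "fsq (dual_frame (cplx_alg X)) (epsilon X x) (epsilon X y) \<longleftrightarrow> fsq X x y"
    if "x \<in> pts X" "y \<in> pts X" for x y
    using that fsq_iff_epsilon by simp
  show "(\<lambda>b. {x\<in>pts X. epsilon X x \<in> b}) ` adm (dual_frame (cplx_alg X)) = adm X"
    using preimage_epsilon_tld by (simp add: image_image cong: image_cong)
qed

end

lemma (in frame_morphism) dual_hom_cplx_hom_epsilon:
  "x \<in> pts X \<Longrightarrow> dual_hom (cplx_alg Y) (cplx_hom X f) (epsilon X x) = epsilon Y (f x)"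
  unfolding dual_hom_def epsilon_def cplx_alg_simps using adm_preimage maps
  by (auto simp: cplx_hom_def)

lemma dual_hom_id: "q \<subseteq> hcar A \<Longrightarrow> dual_hom A (\<lambda>a. a) q = q"
  unfolding dual_hom_def by auto

lemma dual_hom_comp:
  "\<forall>a\<in>hcar A. h a \<in> hcar B \<Longrightarrow> dual_hom A (g \<circ> h) q = dual_hom A h (dual_hom B g q)"
  unfolding dual_hom_def by auto

lemma cplx_hom_id: "a \<subseteq> pts X \<Longrightarrow> cplx_hom X (\<lambda>x. x) a = a"
  unfolding cplx_hom_def by auto

lemma cplx_hom_comp:
  "\<forall>x\<in>pts X. f x \<in> pts Y \<Longrightarrow> cplx_hom X (g \<circ> f) c = cplx_hom X f (cplx_hom Y g c)"
  unfolding cplx_hom_def by auto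

lemma hla_morphismI: "is_hla A \<Longrightarrow> is_hla B \<Longrightarrow> hla_hom A B h \<Longrightarrow> hla_morphism A B h"
  by (simp add: hla_morphism_def hla_morphism_axioms_def hl_alg_def)

lemma desc_frameI: "descriptive_frame X \<Longrightarrow> desc_frame X"
  unfolding desc_frame_def desc_frame_axioms_def gen_frame_def descriptive_frame_def by simp

lemma frame_morphismI:
  "descriptive_frame X \<Longrightarrow> descriptive_frame Y \<Longrightarrow> dframe_mor X Y f \<Longrightarrow> frame_morphism X Y f"
  unfolding frame_morphism_def frame_morphism_axioms_def gen_frame_def descriptive_frame_def
  by simp

theorem theorem3p20:
  shows
  \<comment> \<open>(.)_* is a functor HLAs -> D-Frm^op\<close>
  "(\<forall>A :: 'a hla. is_hla A \<longrightarrow> descriptive_frame (dual_frame A))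
 \<and> (\<forall>(A :: 'a hla) (B :: 'b hla) h. is_hla A \<and> is_hla B \<and> hla_hom A B h \<longrightarrow>
        dframe_mor (dual_frame B) (dual_frame A) (dual_hom A h))
 \<and> (\<forall>A :: 'a hla. is_hla A \<longrightarrow> (\<forall>q\<in>pf A. dual_hom A (\<lambda>a. a) q = q))
 \<and> (\<forall>(A :: 'a hla) (B :: 'b hla) (C :: 'c hla) h g.
        is_hla A \<and> is_hla B \<and> is_hla C \<and> hla_hom A B h \<and> hla_hom B C g \<longrightarrow>
        (\<forall>q\<in>pf C. dual_hom A (g \<circ> h) q = dual_hom A h (dual_hom B g q)))
 \<and> (\<forall>X :: 'x gframe. descriptive_frame X \<longrightarrow> is_hla (cplx_alg X))
 \<and> (\<forall>(X :: 'x gframe) (Y :: 'y gframe) f. descriptive_frame X \<and> descriptive_frame Y \<and>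
        dframe_mor X Y f \<longrightarrow> hla_hom (cplx_alg Y) (cplx_alg X) (cplx_hom X f))
 \<and> (\<forall>X :: 'x gframe. descriptive_frame X \<longrightarrow> (\<forall>a\<in>adm X. cplx_hom X (\<lambda>x. x) a = a))
 \<and> (\<forall>(X :: 'x gframe) (Y :: 'y gframe) (Z :: 'z gframe) f g.
        descriptive_frame X \<and> descriptive_frame Y \<and> descriptive_frame Z \<and>
        dframe_mor X Y f \<and> dframe_mor Y Z g \<longrightarrow>
        (\<forall>c\<in>adm Z. cplx_hom X (g \<circ> f) c = cplx_hom X f (cplx_hom Y g c)))
 \<and> (\<forall>A :: 'a hla. is_hla A \<longrightarrow> hla_iso A (cplx_alg (dual_frame A)) (eta A))
 \<and> (\<forall>(A :: 'a hla) (B :: 'b hla) h. is_hla A \<and> is_hla B \<and> hla_hom A B h \<longrightarrow>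
        (\<forall>a\<in>hcar A. cplx_hom (dual_frame B) (dual_hom A h) (eta A a) = eta B (h a)))
 \<and> (\<forall>X :: 'x gframe. descriptive_frame X \<longrightarrow> dframe_iso X (dual_frame (cplx_alg X)) (epsilon X))
 \<and> (\<forall>(X :: 'x gframe) (Y :: 'y gframe) f. descriptive_frame X \<and> descriptive_frame Y \<and>
        dframe_mor X Y f \<longrightarrow>
        (\<forall>x\<in>pts X. dual_hom (cplx_alg Y) (cplx_hom X f) (epsilon X x) = epsilon Y (f x)))"
proof (intro conjI allI impI ballI; (elim conjE)?)
  fix A :: "'a hla" assume "is_hla A"
  then show "descriptive_frame (dual_frame A)" "hla_iso A (cplx_alg (dual_frame A)) (eta A)"
    using hl_alg.dual_descriptive hl_alg.hla_iso_eta hl_alg.intro by blast+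
  show "dual_hom A (\<lambda>a. a) q = q" if "q \<in> pf A" for q
    using that dual_hom_id unfolding pf_def prime_filter_def by blast
next
  fix A :: "'a hla" and B :: "'b hla" and h assume "is_hla A" "is_hla B" "hla_hom A B h"
  then have "hla_morphism A B h"
    by (rule hla_morphismI)
  then show "dframe_mor (dual_frame B) (dual_frame A) (dual_hom A h)"
    and "\<And>a. a \<in> hcar A \<Longrightarrow> cplx_hom (dual_frame B) (dual_hom A h) (eta A a) = eta B (h a)"
    by (simp_all add: hla_morphism.dual_hom_mor hla_morphism.dual_hom_eta)
next
  fix A :: "'a hla" and B :: "'b hla" and h g q assume "hla_hom A B h"
  then have "\<forall>a\<in>hcar A. h a \<in> hcar B"
    unfolding hla_hom_def by blast
  then show "dual_hom A (g \<circ> h) q = dual_hom A h (dual_hom B g q)"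
    by (rule dual_hom_comp)
next
  fix X :: "'x gframe" assume "descriptive_frame X"
  then have "desc_frame X"
    by (rule desc_frameI)
  then show "is_hla (cplx_alg X)" "dframe_iso X (dual_frame (cplx_alg X)) (epsilon X)"
    and "\<And>a. a \<in> adm X \<Longrightarrow> cplx_hom X (\<lambda>x. x) a = a"
    by (simp_all add: desc_frame_def gen_frame.is_hla_cplx_alg desc_frame.dframe_iso_epsilon
        gen_frame.adm_subset cplx_hom_id)
next
  fix X :: "'x gframe" and Y :: "'y gframe" and f
  assume "descriptive_frame X" "descriptive_frame Y" "dframe_mor X Y f"
  then have "frame_morphism X Y f"
    by (rule frame_morphismI)
  then show "hla_hom (cplx_alg Y) (cplx_alg X) (cplx_hom X f)"
    and "\<And>x. x \<in> pts X \<Longrightarrow> dual_hom (cplx_alg Y) (cplx_hom X f) (epsilon X x) = epsilon Y (f x)"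
    by (simp_all add: frame_morphism.hla_hom_cplx_hom frame_morphism.dual_hom_cplx_hom_epsilon)
next
  fix X :: "'x gframe" and Y :: "'y gframe" and f g c assume "dframe_mor X Y f"
  then have "\<forall>x\<in>pts X. f x \<in> pts Y"
    unfolding dframe_mor_def by blast
  then show "cplx_hom X (g \<circ> f) c = cplx_hom X f (cplx_hom Y g c)"
    by (rule cplx_hom_comp)
qed

end
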